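(* Fix parameters $\tau\in(0,1/100)$ and $M\ge2$, and let $\theta=2+\tau$. Let $G$ be a non-trivial and structured GCD graph with set of primes $\mathcal{P}$ such that \[ \mathcal{R}(G)\subseteq\{p> C_6\} \quad\text{and}\quad \mathcal{R}_-(G)\neq\emptyset. \] Then there is a numerator-exact GCD subgraph $G'$ of $G$ with multiplicative data $(\mathcal{P}',f',g')$ such that: (a) $G'$ is non-trivial and maximal; (b) $\mathcal{P}\subsetneq\mathcal{P}'\subseteq \mathcal{P}\cup \mathcal{R}_-(G)$, $\mathcal{R}_-(G')\subsetneq \mathcal{R}_-(G)$, and $\mathcal{R}_+(G')\subseteq \mathcal{R}_+(G)$; (c) $f'(p)\le 0$ and $g'(p)\le 0$ for all $p\in\mathcal{P}'\setminus\mathcal{P}$; (d) $q(G')\geqslant q(G)\prod_{p\in\mathcal{P}'\setminus\mathcal{P}} (1-\mathbbm{1}_{f'(p)=g'(p)<0}/p)^2 (1-1/p^{1+\frac{\tau}{4}})$.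
   Context: For a prime $p$, $k\in\mathbb{Z}$ and $\rho\in\mathbb{Q}_{>0}$, write $\operatorname{e}_p(\rho)=k$ if $\rho=p^ka/q$ with $a,q\in\mathbb{N}$, $p\nmid aq$. For real $t$, $t^+=\max\{t,0\}$, $t^-=\max\{-t,0\}$. Weighted bipartite graph: $(\mu,\mathcal{V},\mathcal{W},\mathcal{E})$ with $\mu:\mathbb{R}_{>0}\to\mathbb{R}_{>0}$, $\mathcal{V},\mathcal{W}$ finite sets of positive reals, $\mathcal{E}\subseteq\mathcal{V}\times\mathcal{W}$; $\mu(\mathcal{T})=\sum_{t\in\mathcal{T}}\mu(t)$, $\mu(\mathcal{E})=\sum_{(v,w)\in\mathcal{E}}\mu(v)\mu(w)$; edge density $\delta=\mu(\mathcal{E})/(\mu(\mathcal{V})\mu(\mathcal{W}))$ if $\mathcal{E}\neq\emptyset$, else $0$; $\mu^{(\theta)}=\delta^\theta\mu(\mathcal{V})\mu(\mathcal{W})$. A subgraph has $\mathcal{V}'\subseteq\mathcal{V}$, $\mathcal{W}'\subseteq\mathcal{W}$, $\mathcal{E}'\subseteq\mathcal{E}\cap(\mathcal{V}'\times\mathcal{W}')$, same $\mu$. "Maximal" means $\mu^{(\theta)}(G)\ge\mu^{(\theta)}(G')$ for every subgraph $G'$ (with $\theta=2+\tau$). GCD graph: a septuple $G=(\mu,\mathcal{V},\mathcal{W},\mathcal{E},\mathcal{P},f,g)$ where $(\mu,\mathcal{V},\mathcal{W},\mathcal{E})$ is a weighted bipartite graph with $\mathcal{V},\mathcal{W}\subset\mathbb{Q}_{>0}$,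 $\mathcal{P}$ is a set of primes (its "set of primes"; $(\mathcal{P},f,g)$ is its "multiplicative data"), $f,g:\mathcal{P}\to\mathbb{Z}$, and for all $p\in\mathcal{P}$ and all $(a/q,b/r)\in\mathcal{V}\times\mathcal{W}$ with $\gcd(a,q)=\gcd(b,r)=1$: $p^{f^+(p)}\mid a$, $p^{g^+(p)}\mid b$, $p^{f^-(p)}\mid q$, $p^{g^-(p)}\mid r$, and if $(a/q,b/r)\in\mathcal{E}$ then the exact power of $p$ dividing $\gcd(a,b)$ is $p^{\min\{f^+(p),g^+(p)\}}$ and that dividing $\gcd(q,r)$ is $p^{\min\{f^-(p),g^-(p)\}}$. $G$ is non-trivial if $\mathcal{E}\neq\emptyset$. Quality: $q(G)=\mu^{(\theta)}(G)\prod_{p\in\mathcal{P}}p^{|f(p)-g(p)|}$. A GCD subgraph $G'=(\mu,\mathcal{V}',\mathcal{W}',\mathcal{E}',\mathcal{P}',f',g')$ of $G$ has $\mathcal{V}'\subseteq\mathcal{V}$, $\mathcal{W}'\subseteq\mathcal{W}$, $\mathcal{E}'\subseteq\mathcal{E}$, $\mathcal{P}'\supseteq\mathcal{P}$, $f'|_{\mathcal{P}}=f$, $g'|_{\mathcal{P}}=g$. It is numerator-exact if for every $p\in\mathcal{P}'\setminus\mathcal{P}$ and every $(a/q,b/r)\in\mathcal{V}'\times\mathcal{W}'$ with $\gcd(a,q)=\gcd(b,r)=1$, $p^{f'^+(p)}$ exactly divides $a$ and $p^{g'^+(p)}$ exactly divides $b$. $\mathcal{R}(G)$ is the set of primes $p\notin\mathcal{P}$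 for which there is $(a/q,b/r)\in\mathcal{E}$ with $\gcd(a,q)=\gcd(b,r)=1$ and $p\mid\gcd(a,b)\gcd(q,r)$. $G$ is structured if for each $p\in\mathcal{R}(G)$ there is $k_p\in\mathbb{Z}$ with $(\operatorname{e}_p(v)-k_p,\operatorname{e}_p(w)-k_p)\in\{(-1,0),(0,-1),(0,0),(0,1),(1,0)\}$ for all $(v,w)\in\mathcal{E}$. For structured $G$, $\mathcal{R}_+(G)$ is the set of $p\in\mathcal{R}(G)$ with $\operatorname{e}_p(v)\ge0$ and $\operatorname{e}_p(w)\ge0$ for all $(v,w)\in\mathcal{E}$, and $\mathcal{R}_-(G)$ is the set of $p\in\mathcal{R}(G)$ with $\operatorname{e}_p(v)\le0$ and $\operatorname{e}_p(w)\le0$ for all $(v,w)\in\mathcal{E}$. Constants: $C_1=10^4/\tau$, $C_2=10MC_1^3$, $C_4=10^{10}M^2C_2^2$, $C_6=\max\{C_4,10^4MC_2,C_2^{10/\tau}\}$. *)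

theory Defs
  imports Complex_Main "HOL-Computational_Algebra.Primes"
begin

text \<open>GCD graphs. Vertices are positive rationals; \<mu> is a weight function on the reals
  (only its values at the vertices matter). The multiplicative data are \<P>, f, g.\<close>

record gcd_graph =
  gmu :: "real \<Rightarrow> real"
  gV  :: "rat set"
  gW  :: "rat set"
  gE  :: "(rat \<times> rat) set"
  gP  :: "nat set"
  gf  :: "nat \<Rightarrow> int"
  gg  :: "nat \<Rightarrow> int"

definition rnum :: "rat \<Rightarrow> int" where "rnum r = fst (quotient_of r)"
definition rden :: "rat \<Rightarrow> int" where "rden r = snd (quotient_of r)"

definition ep :: "nat \<Rightarrow> rat \<Rightarrow> int" where
  "ep p r = int (multiplicity (int p) (rnum r)) - int (multiplicity (int p) (rden r))"

definition pos_part :: "int \<Rightarrow> nat" where "pos_part t = nat (max t 0)"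
definition neg_part :: "int \<Rightarrow> nat" where "neg_part t = nat (max (- t) 0)"

definition wsum :: "(real \<Rightarrow> real) \<Rightarrow> rat set \<Rightarrow> real" where
  "wsum \<mu> T = (\<Sum>t\<in>T. \<mu> (of_rat t))"

definition esum :: "(real \<Rightarrow> real) \<Rightarrow> (rat \<times> rat) set \<Rightarrow> real" where
  "esum \<mu> E = (\<Sum>(v,w)\<in>E. \<mu> (of_rat v) * \<mu> (of_rat w))"

definition density :: "(real \<Rightarrow> real) \<Rightarrow> rat set \<Rightarrow> rat set \<Rightarrow> (rat \<times> rat) set \<Rightarrow> real" where
  "density \<mu> V W E = (if E \<noteq> {} then esum \<mu> E / (wsum \<mu> V * wsum \<mu> W) else 0)"

definition mu_theta :: "real \<Rightarrow> (real \<Rightarrow> real) \<Rightarrow> rat set \<Rightarrow> rat set \<Rightarrow> (rat \<times> rat) set \<Rightarrow> real" where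
  "mu_theta \<theta> \<mu> V W E = density \<mu> V W E powr \<theta> * wsum \<mu> V * wsum \<mu> W"

definition is_wbg :: "(real \<Rightarrow> real) \<Rightarrow> rat set \<Rightarrow> rat set \<Rightarrow> (rat \<times> rat) set \<Rightarrow> bool" where
  "is_wbg \<mu> V W E \<longleftrightarrow> (\<forall>x>0. \<mu> x > 0) \<and> finite V \<and> finite W \<and>
     (\<forall>v\<in>V. v > 0) \<and> (\<forall>w\<in>W. w > 0) \<and> E \<subseteq> V \<times> W"

definition maximal :: "real \<Rightarrow> gcd_graph \<Rightarrow> bool" where
  "maximal \<theta> G \<longleftrightarrow> (\<forall>V' W' E'. V' \<subseteq> gV G \<longrightarrow> W' \<subseteq> gW G \<longrightarrow> E' \<subseteq> gE G \<inter> (V' \<times> W') \<longrightarrow>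
      mu_theta \<theta> (gmu G) (gV G) (gW G) (gE G) \<ge> mu_theta \<theta> (gmu G) V' W' E')"

definition is_gcd_graph :: "gcd_graph \<Rightarrow> bool" where
  "is_gcd_graph G \<longleftrightarrow> is_wbg (gmu G) (gV G) (gW G) (gE G) \<and>
     finite (gP G) \<and> (\<forall>p\<in>gP G. prime p) \<and>
     (\<forall>p\<in>gP G. \<forall>v\<in>gV G. \<forall>w\<in>gW G.
        (int p) ^ pos_part (gf G p) dvd rnum v \<and>
        (int p) ^ pos_part (gg G p) dvd rnum w \<and>
        (int p) ^ neg_part (gf G p) dvd rden v \<and>
        (int p) ^ neg_part (gg G p) dvd rden w \<and>
        ((v, w) \<in> gE G \<longrightarrow>
           multiplicity (int p) (gcd (rnum v) (rnum w)) = min (pos_part (gf G p)) (pos_part (gg G p)) \<and>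
           multiplicity (int p) (gcd (rden v) (rden w)) = min (neg_part (gf G p)) (neg_part (gg G p))))"

definition nontrivial :: "gcd_graph \<Rightarrow> bool" where
  "nontrivial G \<longleftrightarrow> gE G \<noteq> {}"

definition quality :: "real \<Rightarrow> gcd_graph \<Rightarrow> real" where
  "quality \<theta> G = mu_theta \<theta> (gmu G) (gV G) (gW G) (gE G) *
     (\<Prod>p\<in>gP G. real p ^ nat \<bar>gf G p - gg G p\<bar>)"

definition gcd_subgraph :: "gcd_graph \<Rightarrow> gcd_graph \<Rightarrow> bool" where
  "gcd_subgraph G' G \<longleftrightarrow> is_gcd_graph G' \<and> gmu G' = gmu G \<and>
     gV G' \<subseteq> gV G \<and> gW G' \<subseteq> gW G \<and> gE G' \<subseteq> gE G \<and> gP G \<subseteq> gP G' \<and>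
     (\<forall>p\<in>gP G. gf G' p = gf G p \<and> gg G' p = gg G p)"

definition numerator_exact :: "gcd_graph \<Rightarrow> gcd_graph \<Rightarrow> bool" where
  "numerator_exact G' G \<longleftrightarrow> gcd_subgraph G' G \<and>
     (\<forall>p\<in>gP G' - gP G.
        (\<forall>v\<in>gV G'. multiplicity (int p) (rnum v) = pos_part (gf G' p)) \<and>
        (\<forall>w\<in>gW G'. multiplicity (int p) (rnum w) = pos_part (gg G' p)))"

definition RG :: "gcd_graph \<Rightarrow> nat set" where
  "RG G = {p. prime p \<and> p \<notin> gP G \<and>
     (\<exists>(v,w)\<in>gE G. int p dvd gcd (rnum v) (rnum w) * gcd (rden v) (rden w))}"

definition structured :: "gcd_graph \<Rightarrow> bool" where
  "structured G \<longleftrightarrow> (\<forall>p\<in>RG G. \<exists>k::int. \<forall>(v,w)\<in>gE G.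
     (ep p v - k, ep p w - k) \<in> {(-1,0), (0,-1), (0,0), (0,1), (1,0)})"

definition RGplus :: "gcd_graph \<Rightarrow> nat set" where
  "RGplus G = {p\<in>RG G. \<forall>(v,w)\<in>gE G. ep p v \<ge> 0 \<and> ep p w \<ge> 0}"

definition RGminus :: "gcd_graph \<Rightarrow> nat set" where
  "RGminus G = {p\<in>RG G. \<forall>(v,w)\<in>gE G. ep p v \<le> 0 \<and> ep p w \<le> 0}"

definition C1 :: "real \<Rightarrow> real" where "C1 \<tau> = 10^4 / \<tau>"
definition C2 :: "real \<Rightarrow> real \<Rightarrow> real" where "C2 \<tau> M = 10 * M * (C1 \<tau>)^3"
definition C4 :: "real \<Rightarrow> real \<Rightarrow> real" where "C4 \<tau> M = 10^10 * M^2 * (C2 \<tau> M)^2"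
definition C6 :: "real \<Rightarrow> real \<Rightarrow> real" where
  "C6 \<tau> M = max (C4 \<tau> M) (max (10^4 * M * C2 \<tau> M) (C2 \<tau> M powr (10 / \<tau>)))"

end

theory Submission
  imports Defs "HOL-Analysis.Analysis"
begin

(*
  Pick p in R_-(G). As G is structured and p divides the denominators of some edge, the p-adic
  valuations along the edges lie in {k-1, k, k+1} for some k <= -1, with at most one endpoint of
  each edge at k+1. Grouping the vertices of valuation <= k, resp. = k+1, splits the edges into
  three blocks, and each block becomes a GCD graph once p joins the set of primes with exponents
  (k, k), (k, k+1) or (k+1, k); the two mixed blocks gain the factor p in the quality.

  Write mu^(theta) = mu(E)^theta (mu(V) mu(W))^(1-theta). If neither mixed block has quality at
  least (1 - p^(-1-tau/4)) q(G), then with x, y the shares of mu(E) in the mixed blocks and s, t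
  the shares of mu(V), mu(W) at valuation k+1 we get p x^theta <= t^(theta-1) and
  p y^theta <= s^(theta-1), and the diagonal block keeps the fraction
  (1-x-y)^theta ((1-s)(1-t))^(1-theta) >= (1-1/p)^2 (1 - p^(-1-tau/4)) of mu^(theta)(G).
  This follows from Bernoulli's and Young's inequalities, treating s and t below and above the
  threshold p^(-1/2-tau/8)/4 separately.

  Finally, a subgraph maximising mu^(theta) is maximal and has no smaller quality; since edges
  only disappear and p has joined the set of primes, the remaining properties follow.
*)

section \<open>Elementary inequalities\<close>

lemma Bernoulli_inequality_powr:
  fixes \<theta> x :: real
  assumes "1 \<le> \<theta>" "0 \<le> x" "x \<le> 1"
  shows "1 - \<theta> * x \<le> (1 - x) powr \<theta>"
proof (cases "x = 1")
  case False
  hence x1: "0 < 1 - x" using assms by simp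
  have "((1 - x) powr \<theta>) powr (1/\<theta>) * 1 powr (1 - 1/\<theta>) \<le> (1/\<theta>) * (1 - x) powr \<theta> + (1 - 1/\<theta>) * 1"
    by (rule Youngs_inequality_0) (use assms x1 in auto)
  moreover have "((1 - x) powr \<theta>) powr (1/\<theta>) = 1 - x"
    using x1 assms by (simp add: powr_powr)
  ultimately have "\<theta> * (1 - x) \<le> \<theta> * ((1/\<theta>) * (1 - x) powr \<theta> + (1 - 1/\<theta>))"
    using assms by (intro mult_left_mono) auto
  also have "\<dots> = (1 - x) powr \<theta> + (\<theta> - 1)"
    using assms by (simp add: algebra_simps)
  finally show ?thesis by (simp add: algebra_simps)
qed (use assms in simp)

lemma Bernoulli_inequality_powr_concave:
  fixes \<tau> s :: real
  assumes "0 \<le> \<tau>" "\<tau> \<le> 1" "0 \<le> s" "s \<le> 1"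
  shows "(1 - s) powr \<tau> \<le> 1 - \<tau> * s"
proof (cases "s = 1")
  case False
  have "(1 - s) powr \<tau> * 1 powr (1 - \<tau>) \<le> \<tau> * (1 - s) + (1 - \<tau>) * 1"
    by (rule Youngs_inequality_0) (use assms False in auto)
  then show ?thesis by (simp add: algebra_simps)
qed (use assms in simp)

definition root_bound :: "real \<Rightarrow> real \<Rightarrow> real \<Rightarrow> real" where
  "root_bound \<theta> P t = P powr (-1/\<theta>) * t powr (1 - 1/\<theta>)"

lemma le_root_bound:
  fixes P x t \<theta> :: real
  assumes "P > 0" "0 \<le> x" "0 \<le> t" "\<theta> > 1" "P * x powr \<theta> \<le> t powr (\<theta> - 1)"
  shows "x \<le> root_bound \<theta> P t"
proof -
  have "x powr \<theta> \<le> t powr (\<theta> - 1) / P" using assms by (simp add: field_simps)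
  hence "(x powr \<theta>) powr (1/\<theta>) \<le> (t powr (\<theta> - 1) / P) powr (1/\<theta>)"
    using assms by (intro powr_mono2) auto
  moreover have "(x powr \<theta>) powr (1/\<theta>) = x" using assms by (simp add: powr_powr)
  moreover have "(t powr (\<theta> - 1) / P) powr (1/\<theta>) = t powr ((\<theta> - 1) * (1/\<theta>)) / P powr (1/\<theta>)"
    by (simp add: powr_divide powr_powr)
  moreover have "(\<theta> - 1) * (1/\<theta>) = 1 - 1/\<theta>" using assms by (simp add: field_simps)
  ultimately show ?thesis
    by (simp add: root_bound_def powr_minus_divide divide_inverse powr_minus mult.commute)
qed

lemma root_bound_le_linear:
  fixes P t \<theta> :: real
  assumes "P > 0" "0 \<le> t" "\<theta> > 1"
  shows "\<theta> * root_bound \<theta> P t \<le> (\<theta> - 1) * t + 1/P"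
proof (cases "t = 0")
  case False
  have "t powr (1 - 1/\<theta>) * (1/P) powr (1/\<theta>) \<le> (1 - 1/\<theta>) * t + (1/\<theta>) * (1/P)"
    by (rule Youngs_inequality_0) (use assms False in auto)
  moreover have "(1/P) powr (1/\<theta>) = P powr (-1/\<theta>)"
    using assms by (simp add: powr_divide powr_minus_divide)
  ultimately have "root_bound \<theta> P t \<le> (1 - 1/\<theta>) * t + (1/\<theta>) * (1/P)"
    by (simp add: root_bound_def mult.commute)
  hence "\<theta> * root_bound \<theta> P t \<le> \<theta> * ((1 - 1/\<theta>) * t + (1/\<theta>) * (1/P))"
    using assms by simp
  also have "\<dots> = (\<theta> - 1) * t + 1/P" using assms by (simp add: field_simps)
  finally show ?thesis .
qed (use assms in \<open>simp add: root_bound_def\<close>)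

lemma root_bound_le_large:
  fixes P t \<theta> \<sigma> :: real
  assumes "P > 0" "0 < \<sigma>" "\<sigma> \<le> t" "\<theta> > 1"
  shows "\<theta> * root_bound \<theta> P t \<le> \<theta> * (P * \<sigma>) powr (-1/\<theta>) * t"
proof -
  have t0: "t > 0" using assms by simp
  have "t powr (1 - 1/\<theta>) = t * t powr (-1/\<theta>)"
    using t0 by (simp add: powr_diff powr_minus_divide)
  moreover have "t powr (-1/\<theta>) \<le> \<sigma> powr (-1/\<theta>)"
    by (rule powr_mono2') (use assms in auto)
  ultimately have "t powr (1 - 1/\<theta>) \<le> t * \<sigma> powr (-1/\<theta>)"
    using t0 by (simp add: mult_left_mono)
  hence "\<theta> * root_bound \<theta> P t \<le> \<theta> * (P powr (-1/\<theta>) * (t * \<sigma> powr (-1/\<theta>)))"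
    unfolding root_bound_def using assms by (intro mult_left_mono) auto
  also have "\<dots> = \<theta> * (P * \<sigma>) powr (-1/\<theta>) * t"
    using assms by (simp add: powr_mult)
  finally show ?thesis .
qed

lemma root_bound_le_quarter:
  fixes \<tau> P t \<sigma> :: real
  assumes "0 < \<tau>" "\<tau> < 1/100" "P > 0" "0 < \<sigma>" "\<sigma> \<le> t" "P * \<sigma> \<ge> 729"
  shows "(2 + \<tau>) * root_bound (2 + \<tau>) P t \<le> t / 4"
proof -
  define \<theta> where "\<theta> = 2 + \<tau>"
  have \<theta>: "2 < \<theta>" "\<theta> \<le> 9/4" using assms by (auto simp: \<theta>_def)
  have "(9::real) = ((9::real) powr 3) powr (1/3)" by (simp add: powr_powr)
  also have "\<dots> = 729 powr (1/3)" by simp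
  also have "\<dots> \<le> 729 powr (1/\<theta>)"
    using \<theta> by (intro powr_mono) (auto simp: field_simps)
  also have "\<dots> \<le> (P * \<sigma>) powr (1/\<theta>)" using assms \<theta> by (intro powr_mono2) auto
  finally have "9 \<le> (P * \<sigma>) powr (1/\<theta>)" .
  moreover have "(P * \<sigma>) powr (-1/\<theta>) = 1 / (P * \<sigma>) powr (1/\<theta>)"
    by (simp add: powr_minus_divide[symmetric])
  ultimately have "(P * \<sigma>) powr (-1/\<theta>) \<le> 1/9"
    by (simp add: divide_le_eq)
  hence "\<theta> * (P * \<sigma>) powr (-1/\<theta>) \<le> 9/4 * (1/9)"
    using \<theta> by (intro mult_mono) auto
  hence "\<theta> * (P * \<sigma>) powr (-1/\<theta>) \<le> 1/4" by simp
  hence "\<theta> * (P * \<sigma>) powr (-1/\<theta>) * t \<le> 1/4 * t" using assms by (intro mult_right_mono) auto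
  moreover have "\<theta> * root_bound \<theta> P t \<le> \<theta> * (P * \<sigma>) powr (-1/\<theta>) * t"
    using root_bound_le_large assms \<theta> by simp
  ultimately show ?thesis by (simp add: \<theta>_def)
qed

lemma perturbation_bounds:
  fixes \<tau> P :: real
  assumes "0 < \<tau>" "\<tau> < 1/100" "P \<ge> 10^20"
  shows "0 < 1 / P powr (1 + \<tau>/4)" "1 / P powr (1 + \<tau>/4) \<le> 1/P"
    "10^7 * (1/P)^2 \<le> 1 / P powr (1 + \<tau>/4)"
proof -
  have P1: "P \<ge> 1" using assms by simp
  show "0 < 1 / P powr (1 + \<tau>/4)" using P1 by simp
  have "P powr 1 \<le> P powr (1 + \<tau>/4)" using P1 assms by (intro powr_mono) auto
  thus "1 / P powr (1 + \<tau>/4) \<le> 1/P" using P1 by (simp add: frac_le)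
  have "P powr (1 + \<tau>/4) \<le> P powr (1 + 1/2)" using P1 assms by (intro powr_mono) auto
  also have "\<dots> = P powr 1 * P powr (1/2)" by (rule powr_add)
  also have "\<dots> = P * sqrt P" using P1 by (simp add: powr_half_sqrt)
  finally have Q: "P powr (1 + \<tau>/4) \<le> P * sqrt P" .
  have "10^10 \<le> sqrt P" by (rule real_le_rsqrt) (use assms in simp)
  hence "10^10 * sqrt P \<le> sqrt P * sqrt P" using P1 by (intro mult_right_mono) auto
  hence "10^7 * sqrt P \<le> sqrt P * sqrt P / 1000" by simp
  also have "\<dots> \<le> P" using P1 by simp
  finally have "10^7 * (1/P)^2 * (P * sqrt P) \<le> 1"
    using P1 by (simp add: power2_eq_square field_simps)
  moreover have "10^7 * (1/P)^2 * P powr (1 + \<tau>/4) \<le> 10^7 * (1/P)^2 * (P * sqrt P)"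
    using Q by (intro mult_left_mono) auto
  ultimately have "10^7 * (1/P)^2 * P powr (1 + \<tau>/4) \<le> 1" by linarith
  thus "10^7 * (1/P)^2 \<le> 1 / P powr (1 + \<tau>/4)"
    using P1 by (simp add: le_divide_eq)
qed

lemma threshold_bounds:
  fixes P r :: real
  assumes "P \<ge> 10^20" "0 < r" "r \<le> 1/P" "10^7 * (1/P)^2 \<le> r"
  shows "790 / P \<le> sqrt r / 4" "sqrt r / 4 \<le> 1/100" "sqrt r / 4 / P \<le> r / 12640"
proof -
  have "(3162 / P)^2 \<le> r" using assms by (simp add: power_divide)
  hence "3162 / P \<le> sqrt r" by (rule real_le_rsqrt)
  moreover have "3160 / P \<le> 3162 / P" using assms by (simp add: divide_right_mono)
  ultimately show sw: "790 / P \<le> sqrt r / 4" by simp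
  have "1/P \<le> 1/10^4" using assms by (simp add: divide_le_eq)
  hence "r \<le> 1/10^4" using assms by linarith
  hence "sqrt r \<le> sqrt (1/10^4)" by (rule real_sqrt_le_mono)
  thus "sqrt r / 4 \<le> 1/100" by (simp add: real_sqrt_divide)
  have "1 / P \<le> sqrt r / 4 / 790" using sw by simp
  hence "sqrt r / 4 * (1 / P) \<le> sqrt r / 4 * (sqrt r / 4 / 790)"
    using assms by (intro mult_left_mono) auto
  hence "sqrt r / 4 / P \<le> sqrt r / 4 * (sqrt r / 4 / 790)" by simp
  also have "\<dots> = r / 12640" using assms by (simp add: power2_eq_square)
  finally show "sqrt r / 4 / P \<le> r / 12640" .
qed

lemma product_le_second_order:
  fixes \<tau> \<sigma> s t :: real
  assumes "0 \<le> \<tau>" "\<tau> \<le> 1/100" "\<sigma> \<le> 1/100"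
    "0 \<le> s" "s \<le> \<sigma>" "0 \<le> t" "t \<le> \<sigma>"
  shows "((1 - s) * (1 - \<tau> * s)) * ((1 - t) * (1 - \<tau> * t)) \<le> 1 - (1 + \<tau>) * (s + t) + 2 * \<sigma>^2"
proof -
  define \<beta> where "\<beta> = 1 + \<tau>"
  have "\<tau> * t \<le> 1" using assms by (intro mult_le_one) auto
  hence v: "0 \<le> (1 - t) * (1 - \<tau> * t)" "(1 - t) * (1 - \<tau> * t) \<le> 1"
    using assms by (auto intro: mult_le_one)
  have bs: "0 \<le> \<beta> * s" "\<beta> * s \<le> (101/100) * \<sigma>" "\<beta> * t \<le> (101/100) * \<sigma>"
    using assms unfolding \<beta>_def by (simp, (intro mult_mono; simp)+)
  have "((1 - s) * (1 - \<tau> * s)) * ((1 - t) * (1 - \<tau> * t))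
      = (1 - \<beta> * s) * ((1 - t) * (1 - \<tau> * t)) + (\<tau> * s^2) * ((1 - t) * (1 - \<tau> * t))"
    by (simp add: \<beta>_def algebra_simps power2_eq_square)
  also have "(\<tau> * s^2) * ((1 - t) * (1 - \<tau> * t)) \<le> \<tau> * s^2"
    using v assms by (simp add: mult_left_le)
  also have "(1 - \<beta> * s) * ((1 - t) * (1 - \<tau> * t)) = (1 - \<beta> * s) * (1 - \<beta> * t) + (1 - \<beta> * s) * (\<tau> * t^2)"
    by (simp add: \<beta>_def algebra_simps power2_eq_square)
  also have "(1 - \<beta> * s) * (\<tau> * t^2) \<le> \<tau> * t^2"
    using bs assms by (simp add: mult_left_le_one_le)
  also have "(1 - \<beta> * s) * (1 - \<beta> * t) = 1 - \<beta> * (s + t) + (\<beta> * s) * (\<beta> * t)"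
    by (simp add: algebra_simps)
  also have "(\<beta> * s) * (\<beta> * t) \<le> ((101/100) * \<sigma>) * ((101/100) * \<sigma>)"
    using bs assms unfolding \<beta>_def by (intro mult_mono) auto
  also have "\<tau> * s^2 \<le> (1/100) * \<sigma>^2" using assms by (intro mult_mono power_mono) auto
  also have "\<tau> * t^2 \<le> (1/100) * \<sigma>^2" using assms by (intro mult_mono power_mono) auto
  finally have "((1 - s) * (1 - \<tau> * s)) * ((1 - t) * (1 - \<tau> * t)) \<le> 1 - \<beta> * (s + t)
      + ((101/100) * \<sigma>) * ((101/100) * \<sigma>) + (1/100) * \<sigma>^2 + (1/100) * \<sigma>^2"
    by simp
  also have "\<dots> \<le> 1 - \<beta> * (s + t) + 2 * \<sigma>^2" by (simp add: power2_eq_square algebra_simps)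
  finally show ?thesis unfolding \<beta>_def .
qed

lemma correction_factor_bounds:
  fixes P r :: real
  assumes "P \<ge> 1" "0 < r" "r \<le> 1/P"
  shows "0 \<le> (1 - 1/P)^2 * (1 - r)" "(1 - 1/P)^2 * (1 - r) \<le> 1"
    "2/P - (1/P)^2 + (1 - 2/P) * r \<le> 1 - (1 - 1/P)^2 * (1 - r)"
proof -
  have a: "0 \<le> 1 - 1/P" "1 - 1/P \<le> 1" using assms by auto
  hence b: "0 \<le> 1 - r" "1 - r \<le> 1" using assms by linarith+
  show "0 \<le> (1 - 1/P)^2 * (1 - r)" using a b by simp
  show "(1 - 1/P)^2 * (1 - r) \<le> 1" using a b by (simp add: power_le_one mult_le_one)
  have "(1 - 2/P) * r \<le> (1 - 1/P)^2 * r"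
    using assms by (intro mult_right_mono) (auto simp: power2_eq_square algebra_simps)
  moreover have "1 - (1 - w)^2 * (1 - r) = 2*w - w^2 + (1 - w)^2 * r" for w :: real
    by (simp add: power2_eq_square algebra_simps)
  ultimately show "2/P - (1/P)^2 + (1 - 2/P) * r \<le> 1 - (1 - 1/P)^2 * (1 - r)" by simp
qed

lemma small_case_arith:
  fixes \<beta> \<sigma> w r :: real
  assumes "1 \<le> \<beta>" "\<beta> \<le> 2" "0 \<le> \<sigma>" "\<beta> * \<sigma> \<le> 1/50" "\<sigma> * w \<le> r / 12640"
    "0 < w" "w \<le> 1/10^20" "w^2 \<le> r / 10^7" "0 < r"
  shows "2*w + r/8 \<le> (1 - 2 * \<beta> * \<sigma>) * (2*w - w^2 + (1 - 2*w) * r)"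
proof -
  have "\<beta> * (\<sigma> * w) \<le> 2 * (\<sigma> * w)" using assms by (intro mult_right_mono) auto
  hence e1: "\<beta> * \<sigma> * w \<le> 2 * (r / 12640)" using assms by (simp add: mult.assoc)
  have e2: "\<beta> * \<sigma> * r \<le> r / 50" using assms by (simp add: mult_right_mono)
  have e3: "0 \<le> \<beta> * \<sigma> * w^2" "0 \<le> \<beta> * \<sigma> * w * r" using assms by auto
  have "w * r \<le> (1/10^20) * r" using assms by (intro mult_right_mono) auto
  hence e4: "w * r \<le> r / 1000" using assms by simp
  have e5: "w^2 \<le> r / 1000" using assms by simp
  have "(1 - 2 * \<beta> * \<sigma>) * (2*w - w^2 + (1 - 2*w) * r)
      = 2*w - w^2 + r - 2*(w*r) - 4*(\<beta>*\<sigma>*w) + 2*(\<beta>*\<sigma>*w^2) - 2*(\<beta>*\<sigma>*r) + 4*(\<beta>*\<sigma>*w*r)"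
    by (simp add: algebra_simps power2_eq_square)
  thus ?thesis using e1 e2 e3 e4 e5 assms by linarith
qed

lemma product_bound_small:
  fixes \<tau> P r s t :: real
  assumes \<tau>: "0 \<le> \<tau>" "\<tau> \<le> 1/100" and P: "P \<ge> 10^20"
    and r: "0 < r" "r \<le> 1/P" "10^7 * (1/P)^2 \<le> r"
    and s: "0 \<le> s" "s \<le> sqrt r / 4" and t: "0 \<le> t" "t \<le> sqrt r / 4"
  shows "(1 - 1/P)^2 * (1 - r) * (((1 - s) * (1 - \<tau> * s)) * ((1 - t) * (1 - \<tau> * t)))
    \<le> 1 - (1 + \<tau>) * (s + t) - 2/P"
proof -
  define \<sigma> where "\<sigma> = sqrt r / 4"
  define w where "w = 1/P"
  define \<beta> where "\<beta> = 1 + \<tau>"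
  define F where "F = (1 - w)^2 * (1 - r)"
  define U where "U = ((1 - s) * (1 - \<tau> * s)) * ((1 - t) * (1 - \<tau> * t))"
  define Z where "Z = 1 - \<beta> * (s + t)"
  have \<sigma>: "\<sigma> \<le> 1/100" "\<sigma> * w \<le> r / 12640" "\<sigma>^2 = r/16" "0 \<le> \<sigma>"
    using threshold_bounds[OF P r] r(1) by (simp_all add: \<sigma>_def w_def power_divide)
  have w: "0 < w" "w \<le> 1/10^20" "w^2 \<le> r / 10^7"
    using P r(3) by (auto simp: w_def field_simps)
  have F: "0 \<le> F" "F \<le> 1" "2*w - w^2 + (1 - 2*w) * r \<le> 1 - F"
    using correction_factor_bounds[of P r] P r by (simp_all add: F_def w_def)
  have \<beta>: "1 \<le> \<beta>" "\<beta> \<le> 2" using \<tau> by (auto simp: \<beta>_def)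
  have "\<beta> * \<sigma> \<le> 2 * (1/100)" using \<beta> \<sigma> by (intro mult_mono) auto
  hence \<beta>\<sigma>: "\<beta> * \<sigma> \<le> 1/50" by simp
  have "\<beta> * (s + t) \<le> \<beta> * (2 * \<sigma>)" using \<beta> s t by (intro mult_left_mono) (auto simp: \<sigma>_def)
  hence Z: "1 - 2 * \<beta> * \<sigma> \<le> Z" "0 \<le> 1 - 2 * \<beta> * \<sigma>" using \<beta>\<sigma> by (auto simp: Z_def)
  have U: "U \<le> Z + 2 * \<sigma>^2" "0 \<le> U"
    using product_le_second_order[of \<tau> \<sigma> s t] \<tau> \<sigma> s t
    by (auto simp: U_def Z_def \<beta>_def \<sigma>_def intro!: mult_nonneg_nonneg mult_le_one)
  have "F * U \<le> F * (Z + 2 * \<sigma>^2)" using U F by (intro mult_left_mono) auto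
  also have "\<dots> \<le> F * Z + 2 * \<sigma>^2" using F by (simp add: distrib_left mult_left_le_one_le)
  finally have FU: "F * U \<le> F * Z + 2 * \<sigma>^2" .
  have "w * w \<le> 1 * w" using w by (intro mult_right_mono) auto
  hence "0 \<le> 2*w - w^2 + (1 - 2*w) * r" using w r by (simp add: power2_eq_square)
  hence "(1 - 2 * \<beta> * \<sigma>) * (2*w - w^2 + (1 - 2*w) * r) \<le> Z * (1 - F)"
    using Z F by (intro mult_mono) auto
  moreover have "2*w + r/8 \<le> (1 - 2 * \<beta> * \<sigma>) * (2*w - w^2 + (1 - 2*w) * r)"
    by (rule small_case_arith) (use \<beta> \<sigma> \<beta>\<sigma> w r in auto)
  ultimately have "F * Z \<le> Z - 2*w - r/8" by (simp add: algebra_simps)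
  hence "F * U \<le> Z - 2*w" using FU \<sigma>(3) by simp
  thus ?thesis by (simp add: F_def U_def Z_def w_def \<beta>_def)
qed

lemma product_bound_one_large:
  fixes \<tau> \<sigma> s t w F Ds Dt us :: real
  assumes "0 \<le> \<tau>" "\<tau> \<le> 1/100" "\<sigma> \<le> 1/100" "0 < w" "790 * w \<le> \<sigma>"
    "\<sigma> < s" "0 \<le> t" "t \<le> \<sigma>" "0 \<le> F" "F \<le> 1"
    "Ds \<le> s/4" "Dt \<le> (1 + \<tau>) * t + w" "0 \<le> us" "us \<le> 1 - s"
  shows "F * (us * ((1 - t) * (1 - \<tau> * t))) \<le> 1 - Ds - Dt"
proof -
  define ut where "ut = (1 - t) * (1 - \<tau> * t)"
  have ut: "ut = 1 - (1 + \<tau>) * t + \<tau> * t^2" by (simp add: ut_def algebra_simps power2_eq_square)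
  have "(1 + \<tau>) * t \<le> (101/100) * (1/100)" using assms by (intro mult_mono) auto
  moreover have "\<tau> * t^2 \<le> (1/100) * \<sigma>^2" using assms by (intro mult_mono power_mono) auto
  moreover have "\<sigma>^2 \<le> \<sigma> * (1/100)" using assms by (simp add: power2_eq_square mult_left_mono)
  moreover have "0 \<le> \<tau> * t^2" using assms by simp
  ultimately have ut_lo: "98/100 \<le> ut" and ut_hi: "ut \<le> 1 - (1 + \<tau>) * t + \<sigma> / 10000"
    using ut by auto
  have "F * (us * ut) \<le> us * ut" using assms ut_lo by (simp add: mult_left_le_one_le)
  also have "\<dots> \<le> (1 - s) * ut" using assms ut_lo by (intro mult_right_mono) auto
  also have "\<dots> \<le> ut - s * (98/100)" using ut_lo assms by (simp add: algebra_simps mult_left_mono)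
  also have "\<dots> \<le> 1 - Ds - Dt" using ut_hi assms by linarith
  finally show ?thesis unfolding ut_def .
qed

text \<open>Below the threshold \<open>\<surd>r/4\<close> the second-order terms are \<open>O(r)\<close> and are paid for by the factor
  \<open>1 - r\<close>; above it the losses are at most a quarter of \<open>s\<close> resp. \<open>t\<close>.\<close>

lemma product_bound:
  fixes \<tau> P r s t Ds Dt :: real
  assumes \<tau>: "0 \<le> \<tau>" "\<tau> \<le> 1/100" and P: "P \<ge> 10^20"
    and r: "0 < r" "r \<le> 1/P" "10^7 * (1/P)^2 \<le> r"
    and s: "0 \<le> s" "s \<le> 1" and t: "0 \<le> t" "t \<le> 1"
    and Ds_lin: "Ds \<le> (1 + \<tau>) * s + 1/P" and Dt_lin: "Dt \<le> (1 + \<tau>) * t + 1/P"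
    and Ds_large: "sqrt r / 4 \<le> s \<Longrightarrow> Ds \<le> s/4"
    and Dt_large: "sqrt r / 4 \<le> t \<Longrightarrow> Dt \<le> t/4"
  shows "(1 - 1/P)^2 * (1 - r) * (((1 - s) * (1 - \<tau> * s)) * ((1 - t) * (1 - \<tau> * t)))
    \<le> 1 - Ds - Dt"
proof -
  define \<sigma> where "\<sigma> = sqrt r / 4"
  define F where "F = (1 - 1/P)^2 * (1 - r)"
  have \<sigma>: "790 * (1/P) \<le> \<sigma>" "\<sigma> \<le> 1/100" using threshold_bounds[OF P r] by (simp_all add: \<sigma>_def)
  have F: "0 \<le> F" "F \<le> 1" using correction_factor_bounds[of P r] P r by (simp_all add: F_def)
  have P0: "0 < 1/P" using P by simp
  have \<tau>1: "\<tau> * s \<le> 1" "\<tau> * t \<le> 1" using \<tau> s t by (auto intro: mult_le_one)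
  have us: "0 \<le> (1 - s) * (1 - \<tau> * s)" "(1 - s) * (1 - \<tau> * s) \<le> 1 - s"
    and ut: "0 \<le> (1 - t) * (1 - \<tau> * t)" "(1 - t) * (1 - \<tau> * t) \<le> 1 - t"
    using s t \<tau> \<tau>1 by (auto intro: mult_left_le)
  consider "s \<le> \<sigma>" "t \<le> \<sigma>" | "\<sigma> < s" "t \<le> \<sigma>" | "s \<le> \<sigma>" "\<sigma> < t" | "\<sigma> < s" "\<sigma> < t"
    by linarith
  then show ?thesis
  proof cases
    case 1
    then show ?thesis using product_bound_small[OF \<tau> P r s(1) _ t(1)] Ds_lin Dt_lin
      by (simp add: \<sigma>_def algebra_simps)
  next
    case 2
    then show ?thesis using product_bound_one_large[OF \<tau> \<sigma>(2) P0 \<sigma>(1) _ t(1) _ F] Ds_large Dt_lin us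
      by (simp add: \<sigma>_def F_def)
  next
    case 3
    then have "F * (((1 - t) * (1 - \<tau> * t)) * ((1 - s) * (1 - \<tau> * s))) \<le> 1 - Dt - Ds"
      using product_bound_one_large[OF \<tau> \<sigma>(2) P0 \<sigma>(1) _ s(1) _ F] Dt_large Ds_lin ut
      by (simp add: \<sigma>_def)
    then show ?thesis by (simp add: F_def ac_simps)
  next
    case 4
    have "F * (((1 - s) * (1 - \<tau> * s)) * ((1 - t) * (1 - \<tau> * t)))
        \<le> ((1 - s) * (1 - \<tau> * s)) * ((1 - t) * (1 - \<tau> * t))"
      using F us ut by (simp add: mult_left_le_one_le)
    also have "\<dots> \<le> (1 - s) * (1 - t)" using us ut by (intro mult_mono) auto
    also have "\<dots> \<le> 1 - s/2 - t/2"
    proof -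
      have "s * t \<le> s" "s * t \<le> t" using s t by (auto simp: mult_left_le mult_left_le_one_le)
      thus ?thesis by (simp add: algebra_simps)
    qed
    finally show ?thesis using 4 Ds_large Dt_large s t by (simp add: \<sigma>_def F_def)
  qed
qed

text \<open>Here \<open>x, y\<close> are the shares of the edge weight in the two mixed blocks and \<open>t, s\<close> the
  shares of vertex weight on the side where they leave the diagonal block.\<close>

lemma normalized_tradeoff:
  fixes \<tau> P s t x y :: real
  assumes \<tau>: "0 < \<tau>" "\<tau> < 1/100" and P: "P \<ge> 10^20"
    and s: "0 \<le> s" "s \<le> 1" and t: "0 \<le> t" "t \<le> 1"
    and xy: "0 \<le> x" "0 \<le> y" "x + y \<le> 1"
    and hx: "P * x powr (2 + \<tau>) \<le> t powr (1 + \<tau>)"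
    and hy: "P * y powr (2 + \<tau>) \<le> s powr (1 + \<tau>)"
  shows "(1 - 1/P)^2 * (1 - 1 / P powr (1 + \<tau>/4)) * ((1 - s) * (1 - t)) powr (1 + \<tau>)
    \<le> (1 - x - y) powr (2 + \<tau>)"
proof -
  define \<theta> where "\<theta> = 2 + \<tau>"
  define r where "r = 1 / P powr (1 + \<tau>/4)"
  define Ds where "Ds = \<theta> * root_bound \<theta> P s"
  define Dt where "Dt = \<theta> * root_bound \<theta> P t"
  have P0: "P > 0" using P by simp
  have \<theta>: "\<theta> > 1" "\<theta> - 1 = 1 + \<tau>" using \<tau> by (auto simp: \<theta>_def)
  have r: "0 < r" "r \<le> 1/P" "10^7 * (1/P)^2 \<le> r"
    using perturbation_bounds[OF \<tau> P] by (simp_all add: r_def)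
  have "729 \<le> P * (sqrt r / 4)"
    using threshold_bounds[OF P r] P0 by (simp add: field_simps)
  hence large: "D \<le> u / 4" if "D = \<theta> * root_bound \<theta> P u" "sqrt r / 4 \<le> u" for D u
    using that root_bound_le_quarter[OF \<tau> P0, of "sqrt r / 4" u] r by (simp add: \<theta>_def)
  have "((1 - s) * (1 - t)) powr (1 + \<tau>) = (1 - s) * (1 - s) powr \<tau> * ((1 - t) * (1 - t) powr \<tau>)"
    using s t by (simp add: powr_mult powr_add)
  also have "\<dots> \<le> ((1 - s) * (1 - \<tau> * s)) * ((1 - t) * (1 - \<tau> * t))"
    using Bernoulli_inequality_powr_concave[of \<tau>] \<tau> s t mult_le_one[of \<tau> s]
    by (intro mult_mono mult_left_mono) auto
  finally have "(1 - 1/P)^2 * (1 - r) * ((1 - s) * (1 - t)) powr (1 + \<tau>)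
      \<le> (1 - 1/P)^2 * (1 - r) * (((1 - s) * (1 - \<tau> * s)) * ((1 - t) * (1 - \<tau> * t)))"
    using correction_factor_bounds[of P r] P r by (intro mult_left_mono) auto
  also have "\<dots> \<le> 1 - Ds - Dt"
    using product_bound[OF _ _ P r s t] root_bound_le_linear[OF P0 _ \<theta>(1)] large \<tau> s t \<theta>(2)
    by (simp add: Ds_def Dt_def)
  also have "\<dots> \<le> 1 - \<theta> * (x + y)"
  proof -
    have "x \<le> root_bound \<theta> P t" "y \<le> root_bound \<theta> P s"
      using le_root_bound[OF P0 xy(1) t(1) \<theta>(1)] le_root_bound[OF P0 xy(2) s(1) \<theta>(1)] hx hy \<theta>
      by (simp_all add: \<theta>_def)
    hence "\<theta> * x \<le> Dt" "\<theta> * y \<le> Ds" using \<theta> by (simp_all add: Ds_def Dt_def)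
    thus ?thesis by (simp add: algebra_simps)
  qed
  also have "\<dots> \<le> (1 - x - y) powr \<theta>"
    using Bernoulli_inequality_powr[of \<theta> "x + y"] \<theta> xy by (simp add: diff_diff_eq)
  finally show ?thesis by (simp add: r_def \<theta>_def)
qed

section \<open>Splitting \<open>mu_theta\<close> into three blocks\<close>

definition mu_theta_val :: "real \<Rightarrow> real \<Rightarrow> real \<Rightarrow> real \<Rightarrow> real" where
  "mu_theta_val \<theta> e a b = (e / (a * b)) powr \<theta> * a * b"

lemma mu_theta_val_commute: "mu_theta_val \<theta> e a b = mu_theta_val \<theta> e b a"
  by (simp add: mu_theta_val_def ac_simps)

lemma mu_theta_val_eq:
  assumes "e \<ge> 0" "a > 0" "b > 0"
  shows "mu_theta_val \<theta> e a b = e powr \<theta> * (a * b) powr (1 - \<theta>)"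
proof -
  have "mu_theta_val \<theta> e a b = e powr \<theta> * ((a * b) powr 1 / (a * b) powr \<theta>)"
    unfolding mu_theta_val_def using assms by (simp add: powr_divide)
  also have "(a * b) powr 1 / (a * b) powr \<theta> = (a * b) powr (1 - \<theta>)" by (simp add: powr_diff)
  finally show ?thesis .
qed

lemma normalized_edge_mass:
  fixes \<theta> P e A B e' a y :: real
  assumes "\<theta> \<ge> 1" "P \<ge> 0" "e > 0" "A > 0" "B > 0" "a \<le> A" "0 \<le> y" "0 \<le> e'"
    and pos: "e' > 0 \<Longrightarrow> a > 0 \<and> y > 0"
    and le: "P * mu_theta_val \<theta> e' a y \<le> mu_theta_val \<theta> e A B"
  shows "P * (e' / e) powr \<theta> \<le> (y / B) powr (\<theta> - 1)"
proof (cases "e' = 0")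
  case False
  with pos assms have a: "a > 0" "y > 0" by auto
  define c where "c = 1 - \<theta>"
  have "P * (e' powr \<theta> * (A * y) powr c) \<le> P * (e' powr \<theta> * (a * y) powr c)"
    using assms a by (auto simp: c_def intro!: mult_left_mono powr_mono2')
  also have "\<dots> \<le> e powr \<theta> * (A * B) powr c"
    using le mu_theta_val_eq[of e' a y \<theta>] mu_theta_val_eq[of e A B \<theta>] assms a by (simp add: c_def)
  finally have "A powr c * (P * e' powr \<theta> * y powr c) \<le> A powr c * (e powr \<theta> * B powr c)"
    using assms a by (simp add: powr_mult algebra_simps)
  hence *: "P * e' powr \<theta> * y powr c \<le> e powr \<theta> * B powr c"
    using assms by (simp add: mult_le_cancel_left_pos)
  have "P * (e' / e) powr \<theta> = (P * e' powr \<theta> * y powr c) / (e powr \<theta> * y powr c)"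
    using assms a by (simp add: powr_divide)
  also have "\<dots> \<le> (e powr \<theta> * B powr c) / (e powr \<theta> * y powr c)"
    using * assms a by (intro divide_right_mono) auto
  also have "\<dots> = (y / B) powr (\<theta> - 1)"
    using assms a by (simp add: c_def powr_divide powr_diff powr_minus_divide divide_simps)
  finally show ?thesis .
qed simp

lemma mu_theta_val_ge_of_normalized:
  fixes \<theta> F e e1 A B a1 b1 X Y :: real
  assumes "\<theta> \<ge> 1" "0 \<le> F" "0 < e" "0 \<le> e1" "0 < a1" "0 < b1" "0 \<le> X" "0 \<le> Y"
    and sA: "a1 + X \<le> A" and sB: "b1 + Y \<le> B"
    and le: "F * ((1 - X/A) * (1 - Y/B)) powr (\<theta> - 1) \<le> (e1 / e) powr \<theta>"
  shows "F * mu_theta_val \<theta> e A B \<le> mu_theta_val \<theta> e1 a1 b1"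
proof -
  define Q where "Q = (1 - X/A) * (1 - Y/B)"
  have AB: "0 < A" "0 < B" "0 < Q" using assms by (auto simp: Q_def)
  have "F * mu_theta_val \<theta> e A B = F * (Q powr (\<theta> - 1) * Q powr (1 - \<theta>)) * mu_theta_val \<theta> e A B"
    using AB by (simp add: powr_add[symmetric])
  also have "\<dots> = (F * Q powr (\<theta> - 1)) * Q powr (1 - \<theta>) * mu_theta_val \<theta> e A B"
    by (simp add: ac_simps)
  also have "\<dots> \<le> (e1 / e) powr \<theta> * Q powr (1 - \<theta>) * e powr \<theta> * (A * B) powr (1 - \<theta>)"
    using le mu_theta_val_eq[of e A B \<theta>] assms AB by (simp add: Q_def mult_right_mono mult.assoc)
  also have "\<dots> = e1 powr \<theta> * ((A - X) * (B - Y)) powr (1 - \<theta>)"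
    using assms AB by (simp add: Q_def powr_divide powr_mult[symmetric] field_simps)
  also have "\<dots> \<le> e1 powr \<theta> * (a1 * b1) powr (1 - \<theta>)"
    using assms by (intro mult_left_mono powr_mono2' mult_mono) auto
  also have "\<dots> = mu_theta_val \<theta> e1 a1 b1" using mu_theta_val_eq assms by simp
  finally show ?thesis .
qed

lemma mu_theta_val_split:
  fixes \<tau> P A B a1 X b1 Y e1 e2 e3 :: real
  assumes \<tau>: "0 < \<tau>" "\<tau> < 1/100" and P: "P \<ge> 10^20"
    and AB: "A > 0" "B > 0" and nn: "0 \<le> a1" "0 \<le> X" "0 \<le> b1" "0 \<le> Y"
    and sA: "a1 + X \<le> A" and sB: "b1 + Y \<le> B"
    and en: "0 \<le> e1" "0 \<le> e2" "0 \<le> e3" "0 < e1 + e2 + e3"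
    and h1: "e1 > 0 \<Longrightarrow> a1 > 0 \<and> b1 > 0"
    and h2: "e2 > 0 \<Longrightarrow> a1 > 0 \<and> Y > 0"
    and h3: "e3 > 0 \<Longrightarrow> X > 0 \<and> b1 > 0"
    and n2: "P * mu_theta_val (2 + \<tau>) e2 a1 Y
      \<le> (1 - 1 / P powr (1 + \<tau>/4)) * mu_theta_val (2 + \<tau>) (e1 + e2 + e3) A B"
    and n3: "P * mu_theta_val (2 + \<tau>) e3 X b1
      \<le> (1 - 1 / P powr (1 + \<tau>/4)) * mu_theta_val (2 + \<tau>) (e1 + e2 + e3) A B"
  shows "(1 - 1/P)^2 * (1 - 1 / P powr (1 + \<tau>/4)) * mu_theta_val (2 + \<tau>) (e1 + e2 + e3) A B
    \<le> mu_theta_val (2 + \<tau>) e1 a1 b1"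
proof -
  define \<theta> where "\<theta> = 2 + \<tau>"
  define F where "F = (1 - 1/P)^2 * (1 - 1 / P powr (1 + \<tau>/4))"
  define e where "e = e1 + e2 + e3"
  have \<theta>: "\<theta> \<ge> 1" "\<theta> - 1 = 1 + \<tau>" using \<tau> by (auto simp: \<theta>_def)
  have e: "e > 0" using en by (simp add: e_def)
  have r: "0 < 1 / P powr (1 + \<tau>/4)" "1 / P powr (1 + \<tau>/4) \<le> 1/P" "1/P < 1"
    using perturbation_bounds[OF \<tau> P] P by auto
  hence "0 < 1 - 1/P" "0 < 1 - 1 / P powr (1 + \<tau>/4)" by linarith+
  hence F: "0 < F" unfolding F_def by (metis mult_pos_pos zero_less_power)
  have "0 \<le> mu_theta_val \<theta> e A B" using mu_theta_val_eq[of e A B \<theta>] e AB by simp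
  hence "P * mu_theta_val \<theta> e2 a1 Y \<le> mu_theta_val \<theta> e A B"
    "P * mu_theta_val \<theta> e3 b1 X \<le> mu_theta_val \<theta> e B A"
    using n2 n3 r by (simp_all add: \<theta>_def e_def mu_theta_val_commute mult_left_le_one_le order_trans)
  hence x2: "P * (e2 / e) powr \<theta> \<le> (Y / B) powr (1 + \<tau>)"
    and x3: "P * (e3 / e) powr \<theta> \<le> (X / A) powr (1 + \<tau>)"
    using normalized_edge_mass[OF \<theta>(1) _ e AB, of P a1 Y e2]
      normalized_edge_mass[OF \<theta>(1) _ e AB(2,1), of P b1 X e3] h2 h3 P sA sB nn en \<theta> by auto
  have "X < A"
  proof (rule ccontr)
    assume "\<not> X < A"
    hence "X = A" "a1 = 0" using sA nn by auto
    hence "e3 = e" using h1 h2 en by (force simp: e_def)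
    thus False using x3 e P AB \<open>X = A\<close> by simp
  qed
  have "Y < B"
  proof (rule ccontr)
    assume "\<not> Y < B"
    hence "Y = B" "b1 = 0" using sB nn by auto
    hence "e2 = e" using h1 h3 en by (force simp: e_def)
    thus False using x2 e P AB \<open>Y = B\<close> by simp
  qed
  have xy: "e2 / e + e3 / e \<le> 1" "1 - e2 / e - e3 / e = e1 / e"
  proof -
    have "e2 / e + e3 / e = (e2 + e3) / e" by (simp add: add_divide_distrib)
    thus "e2 / e + e3 / e \<le> 1" using e en by (simp add: e_def divide_le_eq)
    have "1 - e2 / e - e3 / e = (e - e2 - e3) / e" using e by (simp add: diff_divide_distrib)
    thus "1 - e2 / e - e3 / e = e1 / e" by (simp add: e_def)
  qed
  have core: "F * ((1 - X/A) * (1 - Y/B)) powr (\<theta> - 1) \<le> (e1 / e) powr \<theta>"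
    using normalized_tradeoff[OF \<tau> P _ _ _ _ _ _ xy(1) x2[unfolded \<theta>_def] x3[unfolded \<theta>_def]]
      xy(2) nn AB e en \<open>X < A\<close> \<open>Y < B\<close> \<theta>(2) by (simp add: F_def \<theta>_def)
  moreover have "0 < F * ((1 - X/A) * (1 - Y/B)) powr (\<theta> - 1)"
    using F AB \<open>X < A\<close> \<open>Y < B\<close> by (intro mult_pos_pos) auto
  ultimately have "e1 \<noteq> 0" by auto
  hence "a1 > 0" "b1 > 0" using h1 en by auto
  from mu_theta_val_ge_of_normalized[OF \<theta>(1) _ e en(1) this nn(2,4) sA sB core] F
  show ?thesis by (simp add: F_def e_def \<theta>_def)
qed

section \<open>Weighted bipartite graphs\<close>

lemma mu_theta_eq_val: "mu_theta \<theta> \<mu> V W E = mu_theta_val \<theta> (esum \<mu> E) (wsum \<mu> V) (wsum \<mu> W)"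
  unfolding mu_theta_def mu_theta_val_def Defs.density_def by (cases "E = {}") (simp_all add: esum_def)

lemma wsum_nonneg: "\<forall>t\<in>T. 0 < \<mu> (of_rat t) \<Longrightarrow> 0 \<le> wsum \<mu> T"
  unfolding wsum_def by (intro sum_nonneg) (auto intro: less_imp_le)

lemma esum_nonneg: "\<forall>(v, w)\<in>E. 0 < \<mu> (of_rat v) \<and> 0 < \<mu> (of_rat w) \<Longrightarrow> 0 \<le> esum \<mu> E"
  unfolding esum_def by (intro sum_nonneg) (auto intro!: mult_nonneg_nonneg less_imp_le)

lemma wbg_weights_pos:
  assumes "is_wbg \<mu> V W E"
  shows "\<forall>v\<in>V. 0 < \<mu> (of_rat v)" "\<forall>w\<in>W. 0 < \<mu> (of_rat w)"
    "\<forall>(v, w)\<in>E. 0 < \<mu> (of_rat v) \<and> 0 < \<mu> (of_rat w)"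
  using assms unfolding is_wbg_def by (auto simp: subset_iff)

lemma esum_pos:
  "finite E \<Longrightarrow> E \<noteq> {} \<Longrightarrow> \<forall>(v, w)\<in>E. 0 < \<mu> (of_rat v) \<and> 0 < \<mu> (of_rat w) \<Longrightarrow> 0 < esum \<mu> E"
  unfolding esum_def by (intro sum_pos) auto

lemma wsum_pos_if_esum_pos:
  assumes "finite V" "finite W" "\<forall>v\<in>V. 0 < \<mu> (of_rat v)" "\<forall>w\<in>W. 0 < \<mu> (of_rat w)"
    "E \<subseteq> V \<times> W" "0 < esum \<mu> E"
  shows "0 < wsum \<mu> V \<and> 0 < wsum \<mu> W"
proof -
  have "E \<noteq> {}" using assms(6) by (auto simp: esum_def)
  hence "V \<noteq> {}" "W \<noteq> {}" using assms(5) by auto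
  thus ?thesis using assms(1-4) unfolding wsum_def by (auto intro!: sum_pos)
qed

lemma wsum_disjoint_le:
  assumes "finite V" "\<forall>v\<in>V. 0 < \<mu> (of_rat v)" "V1 \<subseteq> V" "V2 \<subseteq> V" "V1 \<inter> V2 = {}"
  shows "wsum \<mu> V1 + wsum \<mu> V2 \<le> wsum \<mu> V"
proof -
  have "wsum \<mu> V1 + wsum \<mu> V2 = wsum \<mu> (V1 \<union> V2)"
    unfolding wsum_def using assms by (intro sum.union_disjoint[symmetric]) (auto intro: finite_subset)
  also have "\<dots> \<le> wsum \<mu> V"
    unfolding wsum_def using assms by (intro sum_mono2) (auto intro: less_imp_le)
  finally show ?thesis .
qed

lemma esum_split_blocks:
  assumes "finite E" "V1 \<inter> V2 = {}" "W1 \<inter> W2 = {}" "E \<subseteq> V1 \<times> W1 \<union> V1 \<times> W2 \<union> V2 \<times> W1"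
  shows "esum \<mu> E = esum \<mu> (E \<inter> V1 \<times> W1) + esum \<mu> (E \<inter> V1 \<times> W2) + esum \<mu> (E \<inter> V2 \<times> W1)"
proof -
  have "((E \<inter> V1 \<times> W1) \<union> (E \<inter> V1 \<times> W2)) \<inter> (E \<inter> V2 \<times> W1) = {}"
    "(E \<inter> V1 \<times> W1) \<inter> (E \<inter> V1 \<times> W2) = {}" using assms(2,3) by blast+
  hence "esum \<mu> (((E \<inter> V1 \<times> W1) \<union> (E \<inter> V1 \<times> W2)) \<union> (E \<inter> V2 \<times> W1))
      = esum \<mu> (E \<inter> V1 \<times> W1) + esum \<mu> (E \<inter> V1 \<times> W2) + esum \<mu> (E \<inter> V2 \<times> W1)"
    unfolding esum_def using assms(1) by (simp add: sum.union_disjoint)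
  moreover have "((E \<inter> V1 \<times> W1) \<union> (E \<inter> V1 \<times> W2)) \<union> (E \<inter> V2 \<times> W1) = E" using assms(4) by blast
  ultimately show ?thesis by simp
qed

lemma mu_theta_split:
  fixes \<tau> P :: real
  assumes \<tau>: "0 < \<tau>" "\<tau> < 1/100" and P: "P \<ge> 10^20"
    and G: "is_wbg \<mu> V W E" "E \<noteq> {}"
    and V12: "V1 \<subseteq> V" "V2 \<subseteq> V" "V1 \<inter> V2 = {}" and W12: "W1 \<subseteq> W" "W2 \<subseteq> W" "W1 \<inter> W2 = {}"
    and E: "E \<subseteq> V1 \<times> W1 \<union> V1 \<times> W2 \<union> V2 \<times> W1"
  shows "(1 - 1 / P powr (1 + \<tau>/4)) * mu_theta (2 + \<tau>) \<mu> V W E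
        \<le> P * mu_theta (2 + \<tau>) \<mu> V1 W2 (E \<inter> V1 \<times> W2)
      \<or> (1 - 1 / P powr (1 + \<tau>/4)) * mu_theta (2 + \<tau>) \<mu> V W E
        \<le> P * mu_theta (2 + \<tau>) \<mu> V2 W1 (E \<inter> V2 \<times> W1)
      \<or> (1 - 1/P)^2 * (1 - 1 / P powr (1 + \<tau>/4)) * mu_theta (2 + \<tau>) \<mu> V W E
        \<le> mu_theta (2 + \<tau>) \<mu> V1 W1 (E \<inter> V1 \<times> W1)"
proof -
  have fin: "finite V" "finite W" "E \<subseteq> V \<times> W" using G(1) by (auto simp: is_wbg_def)
  hence finE: "finite E" by (meson finite_SigmaI finite_subset)
  note \<mu> = wbg_weights_pos[OF G(1)]
  have \<mu>': "\<forall>(v, w)\<in>E'. 0 < \<mu> (of_rat v) \<and> 0 < \<mu> (of_rat w)" if "E' \<subseteq> E" for E'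
    using \<mu>(3) that by blast
  have pos: "0 < esum \<mu> E' \<Longrightarrow> 0 < wsum \<mu> V' \<and> 0 < wsum \<mu> W'"
    if "V' \<subseteq> V" "W' \<subseteq> W" "E' \<subseteq> V' \<times> W'" for V' W' E'
  proof -
    have "finite V'" "finite W'" using that fin finite_subset by blast+
    moreover have "\<forall>v\<in>V'. 0 < \<mu> (of_rat v)" "\<forall>w\<in>W'. 0 < \<mu> (of_rat w)" using that \<mu> by blast+
    ultimately show "0 < esum \<mu> E' \<Longrightarrow> 0 < wsum \<mu> V' \<and> 0 < wsum \<mu> W'"
      using wsum_pos_if_esum_pos that(3) by blast
  qed
  have esplit: "esum \<mu> E = esum \<mu> (E \<inter> V1 \<times> W1) + esum \<mu> (E \<inter> V1 \<times> W2) + esum \<mu> (E \<inter> V2 \<times> W1)"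
    using esum_split_blocks[OF finE V12(3) W12(3) E] .
  have epos: "0 < esum \<mu> E" using esum_pos[OF finE G(2) \<mu>(3)] .
  have AB: "0 < wsum \<mu> V" "0 < wsum \<mu> W" using pos[of V W E] fin epos by auto
  have "(1 - 1/P)^2 * (1 - 1 / P powr (1 + \<tau>/4)) * mu_theta (2 + \<tau>) \<mu> V W E
      \<le> mu_theta (2 + \<tau>) \<mu> V1 W1 (E \<inter> V1 \<times> W1)"
    if "P * mu_theta (2 + \<tau>) \<mu> V1 W2 (E \<inter> V1 \<times> W2)
          \<le> (1 - 1 / P powr (1 + \<tau>/4)) * mu_theta (2 + \<tau>) \<mu> V W E"
      "P * mu_theta (2 + \<tau>) \<mu> V2 W1 (E \<inter> V2 \<times> W1)
          \<le> (1 - 1 / P powr (1 + \<tau>/4)) * mu_theta (2 + \<tau>) \<mu> V W E"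
  proof -
    have en: "0 \<le> esum \<mu> (E \<inter> V1 \<times> W1)" "0 \<le> esum \<mu> (E \<inter> V1 \<times> W2)"
      "0 \<le> esum \<mu> (E \<inter> V2 \<times> W1)" using esum_nonneg \<mu>' by (meson Int_lower1)+
    have nn: "0 \<le> wsum \<mu> V1" "0 \<le> wsum \<mu> V2" "0 \<le> wsum \<mu> W1" "0 \<le> wsum \<mu> W2"
      using wsum_nonneg \<mu>(1,2) V12 W12 by (meson subsetD)+
    show ?thesis
      using mu_theta_val_split[OF \<tau> P AB nn
          wsum_disjoint_le[OF fin(1) \<mu>(1) V12] wsum_disjoint_le[OF fin(2) \<mu>(2) W12] en]
        pos[of V1 W1 "E \<inter> V1 \<times> W1"] pos[of V1 W2 "E \<inter> V1 \<times> W2"] pos[of V2 W1 "E \<inter> V2 \<times> W1"]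
        V12 W12 epos esplit that
      unfolding mu_theta_eq_val by simp
  qed
  thus ?thesis by linarith
qed

lemma mu_theta_pos:
  assumes "is_wbg \<mu> V W E" "E \<noteq> {}"
  shows "0 < mu_theta \<theta> \<mu> V W E"
proof -
  have fin: "finite V" "finite W" "E \<subseteq> V \<times> W" using assms(1) by (auto simp: is_wbg_def)
  hence e: "0 < esum \<mu> E"
    using esum_pos assms wbg_weights_pos(3)[OF assms(1)] by (meson finite_SigmaI finite_subset)
  hence "0 < wsum \<mu> V \<and> 0 < wsum \<mu> W"
    using wsum_pos_if_esum_pos fin wbg_weights_pos[OF assms(1)] by blast
  thus ?thesis using e by (simp add: mu_theta_eq_val mu_theta_val_def)
qed

lemma exists_maximal_restriction:
  assumes "is_wbg (gmu H) (gV H) (gW H) (gE H)"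
  obtains V0 W0 E0 where "V0 \<subseteq> gV H" "W0 \<subseteq> gW H" "E0 \<subseteq> gE H \<inter> (V0 \<times> W0)"
    "maximal \<theta> (H\<lparr>gV := V0, gW := W0, gE := E0\<rparr>)"
    "mu_theta \<theta> (gmu H) (gV H) (gW H) (gE H) \<le> mu_theta \<theta> (gmu H) V0 W0 E0"
proof -
  define S where "S = {(V', W', E'). V' \<subseteq> gV H \<and> W' \<subseteq> gW H \<and> E' \<subseteq> gE H \<inter> (V' \<times> W')}"
  define m where "m = (\<lambda>(V', W', E'). mu_theta \<theta> (gmu H) V' W' E')"
  have "S \<subseteq> Pow (gV H) \<times> Pow (gW H) \<times> Pow (gE H)" by (auto simp: S_def)
  moreover have "finite (gE H)"
    using assms by (auto simp: is_wbg_def intro: finite_subset[OF _ finite_cartesian_product])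
  ultimately have "finite S" using assms by (meson finite_Pow_iff finite_SigmaI finite_subset is_wbg_def)
  hence "finite (m ` S)" by simp
  moreover have H: "(gV H, gW H, gE H) \<in> S" using assms by (auto simp: S_def is_wbg_def)
  ultimately have "Max (m ` S) \<in> m ` S" by (intro Max_in) auto
  then obtain x where x: "x \<in> S" "m x = Max (m ` S)" by auto
  obtain V0 W0 E0 where x0: "x = (V0, W0, E0)" by (cases x)
  have mx: "m y \<le> m x" if "y \<in> S" for y using x that \<open>finite (m ` S)\<close> by simp
  have sub: "V0 \<subseteq> gV H" "W0 \<subseteq> gW H" "E0 \<subseteq> gE H \<inter> (V0 \<times> W0)" using x(1) x0 by (auto simp: S_def)
  have "mu_theta \<theta> (gmu H) V' W' E' \<le> mu_theta \<theta> (gmu H) V0 W0 E0"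
    if "V' \<subseteq> V0" "W' \<subseteq> W0" "E' \<subseteq> E0 \<inter> (V' \<times> W')" for V' W' E'
  proof -
    have "(V', W', E') \<in> S" using sub that by (auto simp: S_def)
    thus ?thesis using mx x0 by (fastforce simp: m_def)
  qed
  hence "maximal \<theta> (H\<lparr>gV := V0, gW := W0, gE := E0\<rparr>)" unfolding maximal_def by simp
  moreover have "m (gV H, gW H, gE H) \<le> m x" using mx H .
  ultimately show ?thesis using that sub x0 by (simp add: m_def)
qed

section \<open>Valuations of rationals\<close>

lemma rden_pos: "rden r > 0"
  unfolding rden_def using quotient_of_denom_pos' by simp

lemma rnum_pos:
  assumes "r > 0"
  shows "rnum r > 0"
proof -
  obtain n d where q: "quotient_of r = (n, d)" by (cases "quotient_of r")
  hence "r = of_int n / of_int d" "d > 0" using quotient_of_div quotient_of_denom_pos by blast+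
  hence "n > 0" using assms by (simp add: zero_less_divide_iff)
  thus ?thesis using q by (simp add: rnum_def)
qed

lemma coprime_rnum_rden: "coprime (rnum r) (rden r)"
  unfolding rnum_def rden_def by (rule quotient_of_coprime) simp

lemma multiplicity_rnum_or_rden_eq_0:
  assumes "prime p"
  shows "multiplicity (int p) (rnum r) = 0 \<or> multiplicity (int p) (rden r) = 0"
proof (rule ccontr)
  assume "\<not> ?thesis"
  hence "int p dvd rnum r" "int p dvd rden r"
    using multiplicity_dvd'[of 1 "int p"] by auto
  hence "is_unit (int p)" using coprime_rnum_rden coprime_common_divisor by blast
  thus False using assms by (simp add: prime_nat_int_transfer)
qed

lemma ep_nonpos_multiplicity:
  assumes "prime p" "ep p r \<le> 0"
  shows "multiplicity (int p) (rnum r) = 0" "int (multiplicity (int p) (rden r)) = - ep p r"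
  using multiplicity_rnum_or_rden_eq_0[OF assms(1), of r] assms(2) unfolding ep_def by auto

lemma ep_nonneg_multiplicity:
  assumes "prime p" "ep p r \<ge> 0"
  shows "multiplicity (int p) (rden r) = 0" "int (multiplicity (int p) (rnum r)) = ep p r"
  using multiplicity_rnum_or_rden_eq_0[OF assms(1), of r] assms(2) unfolding ep_def by auto

lemma prime_dvd_iff_multiplicity_pos:
  assumes "prime p" "x \<noteq> 0"
  shows "int p dvd x \<longleftrightarrow> multiplicity (int p) x > 0"
  using assms by (simp add: prime_multiplicity_gt_zero_iff prime_nat_int_transfer)

text \<open>As \<open>gcd(a, q) = gcd(b, r) = 1\<close>, a prime dividing \<open>gcd(a, b) gcd(q, r)\<close> for \<open>v = a/q\<close>,
  \<open>w = b/r\<close> divides both numerators or both denominators.\<close>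

lemma ep_le_minus_one_if_dvd_gcds:
  assumes "prime q" "v > 0" "w > 0"
    and dvd: "int q dvd gcd (rnum v) (rnum w) * gcd (rden v) (rden w)"
    and "ep q v \<le> 0" "ep q w \<le> 0"
  shows "ep q v \<le> -1" "ep q w \<le> -1"
proof -
  have "\<not> int q dvd rnum v"
    using ep_nonpos_multiplicity(1)[OF assms(1,5)] prime_dvd_iff_multiplicity_pos[OF assms(1)]
      rnum_pos[OF assms(2)] by simp
  hence "\<not> int q dvd gcd (rnum v) (rnum w)" by (meson dvd_trans gcd_dvd1)
  hence "int q dvd gcd (rden v) (rden w)"
    using dvd assms(1) prime_dvd_mult_iff[of "int q"] by (auto simp: prime_nat_int_transfer)
  hence "int q dvd rden v" "int q dvd rden w" by (meson dvd_trans gcd_dvd1 gcd_dvd2)+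
  hence "multiplicity (int q) (rden v) > 0" "multiplicity (int q) (rden w) > 0"
    using prime_dvd_iff_multiplicity_pos[OF assms(1)] rden_pos[of v] rden_pos[of w] by auto
  thus "ep q v \<le> -1" "ep q w \<le> -1"
    using ep_nonpos_multiplicity(2)[OF assms(1)] assms(5,6) by fastforce+
qed

lemma ep_ge_one_if_dvd_gcds:
  assumes "prime q" "v > 0" "w > 0"
    and dvd: "int q dvd gcd (rnum v) (rnum w) * gcd (rden v) (rden w)"
    and "ep q v \<ge> 0" "ep q w \<ge> 0"
  shows "ep q v \<ge> 1" "ep q w \<ge> 1"
proof -
  have "\<not> int q dvd rden v"
    using ep_nonneg_multiplicity(1)[OF assms(1,5)] prime_dvd_iff_multiplicity_pos[OF assms(1)]
      rden_pos[of v] by simp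
  hence "\<not> int q dvd gcd (rden v) (rden w)" by (meson dvd_trans gcd_dvd1)
  hence "int q dvd gcd (rnum v) (rnum w)"
    using dvd assms(1) prime_dvd_mult_iff[of "int q"] by (auto simp: prime_nat_int_transfer)
  hence "int q dvd rnum v" "int q dvd rnum w" by (meson dvd_trans gcd_dvd1 gcd_dvd2)+
  hence "multiplicity (int q) (rnum v) > 0" "multiplicity (int q) (rnum w) > 0"
    using prime_dvd_iff_multiplicity_pos[OF assms(1)] rnum_pos[OF assms(2)] rnum_pos[OF assms(3)]
    by auto
  thus "ep q v \<ge> 1" "ep q w \<ge> 1"
    using ep_nonneg_multiplicity(2)[OF assms(1)] assms(5,6) by fastforce+
qed

lemma RG_mono:
  assumes "gE G' \<subseteq> gE G" "gP G \<subseteq> gP G'"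
  shows "RG G' \<subseteq> RG G"
  using assms unfolding RG_def by blast

lemma RG_witness:
  assumes "q \<in> RG G"
  obtains v w where "(v, w) \<in> gE G" "prime q" "q \<notin> gP G"
    "int q dvd gcd (rnum v) (rnum w) * gcd (rden v) (rden w)"
  using assms unfolding RG_def by blast

lemma gcd_graph_edge_pos: "is_gcd_graph G \<Longrightarrow> \<forall>(v, w)\<in>gE G. 0 < v \<and> 0 < w"
  unfolding is_gcd_graph_def is_wbg_def by blast

lemma RGminus_witness:
  assumes "q \<in> RGminus G" "\<forall>(v, w)\<in>gE G. 0 < v \<and> 0 < w"
  obtains v w where "(v, w) \<in> gE G" "ep q v \<le> -1" "ep q w \<le> -1"
proof -
  obtain v w where vw: "(v, w) \<in> gE G" "prime q"
    "int q dvd gcd (rnum v) (rnum w) * gcd (rden v) (rden w)"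
    using assms(1) by (auto simp: RGminus_def elim: RG_witness)
  moreover have "ep q v \<le> 0" "ep q w \<le> 0" using assms(1) vw(1) by (auto simp: RGminus_def)
  ultimately show ?thesis using that ep_le_minus_one_if_dvd_gcds[of q v w] assms(2) by blast
qed

lemma RGplus_witness:
  assumes "q \<in> RGplus G" "\<forall>(v, w)\<in>gE G. 0 < v \<and> 0 < w"
  obtains v w where "(v, w) \<in> gE G" "ep q v \<ge> 1" "ep q w \<ge> 1"
proof -
  obtain v w where vw: "(v, w) \<in> gE G" "prime q"
    "int q dvd gcd (rnum v) (rnum w) * gcd (rden v) (rden w)"
    using assms(1) by (auto simp: RGplus_def elim: RG_witness)
  moreover have "ep q v \<ge> 0" "ep q w \<ge> 0" using assms(1) vw(1) by (auto simp: RGplus_def)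
  ultimately show ?thesis using that ep_ge_one_if_dvd_gcds[of q v w] assms(2) by blast
qed

lemma structured_level:
  assumes "structured G" "q \<in> RG G"
  obtains k where "\<forall>(v, w)\<in>gE G. (ep q v - k, ep q w - k) \<in> {(-1,0), (0,-1), (0,0), (0,1), (1,0)}"
  using assms unfolding structured_def by blast

text \<open>On a structured graph all valuations at \<open>q\<close> along edges lie in \<open>{k-1, k, k+1}\<close> for one \<open>k\<close>,
  so one edge with both valuations \<open>\<le> -1\<close> (resp. \<open>\<ge> 1\<close>) forces the sign of all of them.\<close>

lemma structured_nonpos_everywhere:
  assumes "structured G" "q \<in> RG G" "(v, w) \<in> gE G" "ep q v \<le> -1" "ep q w \<le> -1"
  shows "\<forall>(v', w')\<in>gE G. ep q v' \<le> 0 \<and> ep q w' \<le> 0"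
proof -
  obtain k where k: "\<forall>(v, w)\<in>gE G. (ep q v - k, ep q w - k) \<in> {(-1,0), (0,-1), (0,0), (0,1), (1,0)}"
    using structured_level[OF assms(1,2)] .
  have "k \<le> -1" using k assms(3-5) by fastforce
  thus ?thesis using k by fastforce
qed

lemma structured_nonneg_everywhere:
  assumes "structured G" "q \<in> RG G" "(v, w) \<in> gE G" "ep q v \<ge> 1" "ep q w \<ge> 1"
  shows "\<forall>(v', w')\<in>gE G. ep q v' \<ge> 0 \<and> ep q w' \<ge> 0"
proof -
  obtain k where k: "\<forall>(v, w)\<in>gE G. (ep q v - k, ep q w - k) \<in> {(-1,0), (0,-1), (0,0), (0,1), (1,0)}"
    using structured_level[OF assms(1,2)] .
  have "k \<ge> 1" using k assms(3-5) by fastforce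
  thus ?thesis using k by fastforce
qed

lemma RGminus_mono:
  assumes G: "is_gcd_graph G" "structured G" and sub: "gE G' \<subseteq> gE G" "gP G \<subseteq> gP G'"
  shows "RGminus G' \<subseteq> RGminus G"
proof
  fix q assume q: "q \<in> RGminus G'"
  hence qR: "q \<in> RG G" using RG_mono[OF sub] by (auto simp: RGminus_def)
  have "\<forall>(v, w)\<in>gE G'. 0 < v \<and> 0 < w" using gcd_graph_edge_pos[OF G(1)] sub by blast
  then obtain v w where "(v, w) \<in> gE G" "ep q v \<le> -1" "ep q w \<le> -1"
    using RGminus_witness[OF q] sub by blast
  thus "q \<in> RGminus G"
    using structured_nonpos_everywhere[OF G(2) qR] qR by (simp add: RGminus_def)
qed

lemma RGplus_mono:
  assumes G: "is_gcd_graph G" "structured G" and sub: "gE G' \<subseteq> gE G" "gP G \<subseteq> gP G'"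
  shows "RGplus G' \<subseteq> RGplus G"
proof
  fix q assume q: "q \<in> RGplus G'"
  hence qR: "q \<in> RG G" using RG_mono[OF sub] by (auto simp: RGplus_def)
  have "\<forall>(v, w)\<in>gE G'. 0 < v \<and> 0 < w" using gcd_graph_edge_pos[OF G(1)] sub by blast
  then obtain v w where "(v, w) \<in> gE G" "ep q v \<ge> 1" "ep q w \<ge> 1"
    using RGplus_witness[OF q] sub by blast
  thus "q \<in> RGplus G"
    using structured_nonneg_everywhere[OF G(2) qR] qR by (simp add: RGplus_def)
qed

lemma RGminus_level:
  assumes G: "is_gcd_graph G" "structured G" and p: "p \<in> RGminus G"
  obtains k where "k \<le> -1"
    "\<forall>(v, w)\<in>gE G. (ep p v - k, ep p w - k) \<in> {(-1,0), (0,-1), (0,0), (0,1), (1,0)}"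
proof -
  obtain k where k: "\<forall>(v, w)\<in>gE G. (ep p v - k, ep p w - k) \<in> {(-1,0), (0,-1), (0,0), (0,1), (1,0)}"
    using structured_level[OF G(2)] p by (auto simp: RGminus_def)
  obtain v w where "(v, w) \<in> gE G" "ep p v \<le> -1" "ep p w \<le> -1"
    using RGminus_witness[OF p gcd_graph_edge_pos[OF G(1)]] .
  hence "k \<le> -1" using k by fastforce
  with k show ?thesis using that by blast
qed

section \<open>Refining a GCD graph at a prime\<close>

lemma is_gcd_graph_restrict:
  assumes "is_gcd_graph H" "V' \<subseteq> gV H" "W' \<subseteq> gW H" "E' \<subseteq> gE H \<inter> (V' \<times> W')"
  shows "is_gcd_graph (H\<lparr>gV := V', gW := W', gE := E'\<rparr>)"
proof -
  have "is_wbg (gmu H) V' W' E'"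
    using assms unfolding is_gcd_graph_def is_wbg_def by (blast intro: finite_subset)
  thus ?thesis using assms unfolding is_gcd_graph_def by (simp add: subset_iff) blast
qed

definition refine_at :: "gcd_graph \<Rightarrow> nat \<Rightarrow> int \<Rightarrow> int \<Rightarrow> rat set \<Rightarrow> rat set \<Rightarrow> gcd_graph" where
  "refine_at G p i j V' W' = G\<lparr>gV := V', gW := W', gE := gE G \<inter> (V' \<times> W'),
     gP := insert p (gP G), gf := (gf G)(p := i), gg := (gg G)(p := j)\<rparr>"

lemma gcd_conditions_nonpos:
  assumes p: "prime p" and pos: "v > 0" "w > 0" and ij: "i \<le> 0" "j \<le> 0"
    and ep: "ep p v \<le> i" "ep p w \<le> j"
  shows "int p ^ pos_part i dvd rnum v" "int p ^ pos_part j dvd rnum w"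
    "int p ^ neg_part i dvd rden v" "int p ^ neg_part j dvd rden w"
    "multiplicity (int p) (gcd (rnum v) (rnum w)) = min (pos_part i) (pos_part j)"
    "max (ep p v) (ep p w) = max i j \<Longrightarrow>
       multiplicity (int p) (gcd (rden v) (rden w)) = min (neg_part i) (neg_part j)"
proof -
  have pp: "prime (int p)" using p by (simp add: prime_nat_int_transfer)
  have ep0: "ep p v \<le> 0" "ep p w \<le> 0" using ep ij by auto
  have pos0: "pos_part i = 0" "pos_part j = 0" using ij by (auto simp: pos_part_def)
  have nz: "rnum v \<noteq> 0" "rnum w \<noteq> 0" "rden v \<noteq> 0" "rden w \<noteq> 0"
    using rnum_pos[OF pos(1)] rnum_pos[OF pos(2)] rden_pos[of v] rden_pos[of w] by auto
  note dv = ep_nonpos_multiplicity[OF p ep0(1)] and dw = ep_nonpos_multiplicity[OF p ep0(2)]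
  show "int p ^ pos_part i dvd rnum v" "int p ^ pos_part j dvd rnum w" using pos0 by auto
  show "int p ^ neg_part i dvd rden v" "int p ^ neg_part j dvd rden w"
  proof -
    have "int (neg_part i) \<le> int (multiplicity (int p) (rden v))"
      "int (neg_part j) \<le> int (multiplicity (int p) (rden w))"
      using dv(2) dw(2) ep by (auto simp: neg_part_def)
    thus "int p ^ neg_part i dvd rden v" "int p ^ neg_part j dvd rden w"
      by (simp_all add: multiplicity_dvd')
  qed
  show "multiplicity (int p) (gcd (rnum v) (rnum w)) = min (pos_part i) (pos_part j)"
    using multiplicity_gcd[OF nz(1,2) pp] dv dw pos0 by simp
  assume "max (ep p v) (ep p w) = max i j"
  thus "multiplicity (int p) (gcd (rden v) (rden w)) = min (neg_part i) (neg_part j)"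
    using multiplicity_gcd[OF nz(3,4) pp] dv(2) dw(2) ij by (auto simp: neg_part_def)
qed

lemma is_gcd_graph_refine_at:
  assumes G: "is_gcd_graph G" and p: "prime p" "p \<notin> gP G"
    and sub: "V' \<subseteq> gV G" "W' \<subseteq> gW G" and ij: "i \<le> 0" "j \<le> 0"
    and hv: "\<forall>v\<in>V'. ep p v \<le> i" and hw: "\<forall>w\<in>W'. ep p w \<le> j"
    and he: "\<forall>(v, w)\<in>gE G \<inter> (V' \<times> W'). max (ep p v) (ep p w) = max i j"
  shows "is_gcd_graph (refine_at G p i j V' W')"
proof -
  have wbg: "is_wbg (gmu G) V' W' (gE G \<inter> (V' \<times> W'))"
    using G sub unfolding is_gcd_graph_def is_wbg_def by (auto intro: finite_subset)
  hence pos: "\<forall>v\<in>V'. v > 0" "\<forall>w\<in>W'. w > 0" by (auto simp: is_wbg_def)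
  define conds where "conds q f g \<longleftrightarrow> (\<forall>v\<in>V'. \<forall>w\<in>W'.
      int q ^ pos_part f dvd rnum v \<and> int q ^ pos_part g dvd rnum w \<and>
      int q ^ neg_part f dvd rden v \<and> int q ^ neg_part g dvd rden w \<and>
      ((v, w) \<in> gE G \<inter> (V' \<times> W') \<longrightarrow>
         multiplicity (int q) (gcd (rnum v) (rnum w)) = min (pos_part f) (pos_part g) \<and>
         multiplicity (int q) (gcd (rden v) (rden w)) = min (neg_part f) (neg_part g)))" for q f g
  have "conds q (gf G q) (gg G q)" if "q \<in> gP G" for q
    using G sub that unfolding is_gcd_graph_def conds_def by blast
  moreover have "conds p i j"
    unfolding conds_def
  proof (intro ballI)
    fix v w assume vw: "v \<in> V'" "w \<in> W'"
    note c = gcd_conditions_nonpos[OF p(1) _ _ ij, of v w]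
    have "(v, w) \<in> gE G \<inter> (V' \<times> W') \<Longrightarrow> max (ep p v) (ep p w) = max i j" using he by blast
    with c vw pos hv hw show "int p ^ pos_part i dvd rnum v \<and> int p ^ pos_part j dvd rnum w \<and>
      int p ^ neg_part i dvd rden v \<and> int p ^ neg_part j dvd rden w \<and>
      ((v, w) \<in> gE G \<inter> (V' \<times> W') \<longrightarrow>
         multiplicity (int p) (gcd (rnum v) (rnum w)) = min (pos_part i) (pos_part j) \<and>
         multiplicity (int p) (gcd (rden v) (rden w)) = min (neg_part i) (neg_part j))"
      by simp
  qed
  ultimately show ?thesis
    using G wbg p unfolding is_gcd_graph_def refine_at_def conds_def by auto
qed

lemma quality_refine_at:
  assumes "finite (gP G)" "p \<notin> gP G"
  shows "quality \<theta> (refine_at G p i j V' W')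
    = real p ^ nat \<bar>i - j\<bar> * mu_theta \<theta> (gmu G) V' W' (gE G \<inter> (V' \<times> W')) *
      (\<Prod>q\<in>gP G. real q ^ nat \<bar>gf G q - gg G q\<bar>)"
proof -
  have "(\<Prod>q\<in>gP G. real q ^ nat \<bar>((gf G)(p := i)) q - ((gg G)(p := j)) q\<bar>)
      = (\<Prod>q\<in>gP G. real q ^ nat \<bar>gf G q - gg G q\<bar>)"
    using assms(2) by (intro prod.cong) auto
  thus ?thesis using assms by (simp add: quality_def refine_at_def)
qed

lemma quality_pos:
  assumes "is_gcd_graph G" "nontrivial G"
  shows "0 < quality \<theta> G"
proof -
  have "0 < (\<Prod>q\<in>gP G. real q ^ nat \<bar>gf G q - gg G q\<bar>)"
    using assms(1) by (intro prod_pos) (auto simp: is_gcd_graph_def prime_gt_0_nat)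
  thus ?thesis using mu_theta_pos assms unfolding quality_def is_gcd_graph_def nontrivial_def by simp
qed

lemma nontrivial_if_quality_pos: "0 < quality \<theta> G \<Longrightarrow> nontrivial G"
  by (auto simp: nontrivial_def quality_def mu_theta_def Defs.density_def)

lemma exists_maximal_gcd_subgraph:
  assumes "is_gcd_graph H"
  obtains G' where "is_gcd_graph G'" "maximal \<theta> G'" "quality \<theta> H \<le> quality \<theta> G'"
    "gmu G' = gmu H" "gV G' \<subseteq> gV H" "gW G' \<subseteq> gW H" "gE G' \<subseteq> gE H"
    "gP G' = gP H" "gf G' = gf H" "gg G' = gg H"
proof -
  obtain V0 W0 E0 where sub: "V0 \<subseteq> gV H" "W0 \<subseteq> gW H" "E0 \<subseteq> gE H \<inter> (V0 \<times> W0)"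
    and max: "maximal \<theta> (H\<lparr>gV := V0, gW := W0, gE := E0\<rparr>)"
    and mu: "mu_theta \<theta> (gmu H) (gV H) (gW H) (gE H) \<le> mu_theta \<theta> (gmu H) V0 W0 E0"
    using exists_maximal_restriction assms unfolding is_gcd_graph_def by blast
  have "quality \<theta> H \<le> quality \<theta> (H\<lparr>gV := V0, gW := W0, gE := E0\<rparr>)"
    unfolding quality_def using mu by (simp add: mult_right_mono prod_nonneg)
  with that[OF is_gcd_graph_restrict[OF assms sub] max] sub show ?thesis by simp
qed

lemma numerator_exact_nonpos_prime:
  assumes sub: "gcd_subgraph G' G" and P': "gP G' = insert p (gP G)" and p: "prime p"
    and nonpos: "gf G' p \<le> 0" "gg G' p \<le> 0"
    and V: "\<forall>v\<in>gV G'. ep p v \<le> 0" and W: "\<forall>w\<in>gW G'. ep p w \<le> 0"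
  shows "numerator_exact G' G"
  using sub P' nonpos ep_nonpos_multiplicity(1)[OF p] V W
  unfolding numerator_exact_def by (auto simp: pos_part_def)

lemma refinement_factor_pos:
  fixes \<tau> :: real
  assumes "0 < \<tau>" "\<tau> < 1/100" "real p \<ge> 10^20"
  shows "0 < (1 - (if b then 1 else 0) / real p)^2 * (1 - 1 / real p powr (1 + \<tau>/4))"
proof -
  have "1 / real p < 1" using assms(3) by simp
  hence "0 < 1 - (if b then 1 else 0) / real p" "0 < 1 - 1 / real p powr (1 + \<tau>/4)"
    using perturbation_bounds(2)[OF assms] by auto
  thus ?thesis by (metis mult_pos_pos zero_less_power)
qed

lemma refinement_from_candidate:
  fixes \<tau> :: real
  assumes G: "is_gcd_graph G" "structured G" and pR: "p \<in> RGminus G"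
    and ij: "i \<le> 0" "j \<le> 0" and sub: "V' \<subseteq> gV G" "W' \<subseteq> gW G"
    and hv: "\<forall>v\<in>V'. ep p v \<le> i" and hw: "\<forall>w\<in>W'. ep p w \<le> j"
    and Gc: "is_gcd_graph (refine_at G p i j V' W')"
    and qual: "quality (2 + \<tau>) G * ((1 - (if i = j \<and> j < 0 then 1 else 0) / real p)^2
        * (1 - 1 / real p powr (1 + \<tau>/4))) \<le> quality (2 + \<tau>) (refine_at G p i j V' W')"
    and qpos: "0 < quality (2 + \<tau>) G * ((1 - (if i = j \<and> j < 0 then 1 else 0) / real p)^2
        * (1 - 1 / real p powr (1 + \<tau>/4)))"
  shows "\<exists>G'. numerator_exact G' G \<and>
      nontrivial G' \<and> maximal (2 + \<tau>) G' \<and>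
      gP G \<subset> gP G' \<and> gP G' \<subseteq> gP G \<union> RGminus G \<and>
      RGminus G' \<subset> RGminus G \<and> RGplus G' \<subseteq> RGplus G \<and>
      (\<forall>p\<in>gP G' - gP G. gf G' p \<le> 0 \<and> gg G' p \<le> 0) \<and>
      quality (2 + \<tau>) G' \<ge> quality (2 + \<tau>) G *
        (\<Prod>p\<in>gP G' - gP G.
           (1 - (if gf G' p = gg G' p \<and> gg G' p < 0 then 1 else 0) / real p)^2 *
           (1 - 1 / real p powr (1 + \<tau>/4)))"
proof -
  have p: "prime p" "p \<notin> gP G" using pR by (auto simp: RGminus_def RG_def)
  obtain G' where G': "is_gcd_graph G'" "maximal (2 + \<tau>) G'"
    "quality (2 + \<tau>) (refine_at G p i j V' W') \<le> quality (2 + \<tau>) G'"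
    and fields: "gP G' = insert p (gP G)" "gf G' = (gf G)(p := i)" "gg G' = (gg G)(p := j)"
      "gmu G' = gmu G" "gV G' \<subseteq> V'" "gW G' \<subseteq> W'" "gE G' \<subseteq> gE G"
    by (rule exists_maximal_gcd_subgraph[OF Gc]) (auto simp: refine_at_def)
  have q: "quality (2 + \<tau>) G * ((1 - (if i = j \<and> j < 0 then 1 else 0) / real p)^2
      * (1 - 1 / real p powr (1 + \<tau>/4))) \<le> quality (2 + \<tau>) G'"
    using qual G'(3) by linarith
  have sg: "gcd_subgraph G' G"
    using G'(1) fields sub p by (auto simp: gcd_subgraph_def)
  have "numerator_exact G' G"
    by (rule numerator_exact_nonpos_prime[OF sg fields(1) p(1)])
       (use fields ij hv hw in \<open>auto dest!: subsetD\<close>)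
  moreover have "nontrivial G'" using q qpos by (intro nontrivial_if_quality_pos[of "2 + \<tau>"]) linarith
  moreover have "RGminus G' \<subset> RGminus G"
  proof -
    have "p \<notin> RGminus G'" using fields(1) by (simp add: RGminus_def RG_def)
    thus ?thesis using RGminus_mono[OF G, of G'] fields pR by auto
  qed
  moreover have "RGplus G' \<subseteq> RGplus G" using RGplus_mono[OF G] fields by auto
  moreover have "gP G \<subset> gP G'" "gP G' \<subseteq> gP G \<union> RGminus G" using fields(1) p(2) pR by auto
  moreover have "gP G' - gP G = {p}" using fields(1) p(2) by auto
  ultimately show ?thesis
    using G'(2) q fields(2,3) ij by (intro exI[of _ G']) simp
qed

text \<open>By the structure condition the valuations at \<open>p\<close> along edges lie in \<open>{k-1, k, k+1}\<close> and at
  most one endpoint has valuation \<open>k+1\<close>. Grouping \<open>k-1\<close> with \<open>k\<close> splits \<open>G\<close> into three blocks,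
  and refining at \<open>p\<close> with exponents \<open>(k, k)\<close>, \<open>(k, k+1)\<close> or \<open>(k+1, k)\<close> realises them.\<close>

lemma exists_good_refinement:
  fixes \<tau> :: real and k :: int
  assumes \<tau>: "0 < \<tau>" "\<tau> < 1/100" and G: "is_gcd_graph G" "nontrivial G"
    and p: "prime p" "p \<notin> gP G" "real p \<ge> 10^20"
    and k: "k \<le> -1" "\<forall>(v, w)\<in>gE G. (ep p v - k, ep p w - k) \<in> {(-1,0), (0,-1), (0,0), (0,1), (1,0)}"
  obtains i j V' W' where "i \<le> 0" "j \<le> 0" "V' \<subseteq> gV G" "W' \<subseteq> gW G"
    "\<forall>v\<in>V'. ep p v \<le> i" "\<forall>w\<in>W'. ep p w \<le> j" "is_gcd_graph (refine_at G p i j V' W')"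
    "quality (2 + \<tau>) G * ((1 - (if i = j \<and> j < 0 then 1 else 0) / real p)^2
        * (1 - 1 / real p powr (1 + \<tau>/4))) \<le> quality (2 + \<tau>) (refine_at G p i j V' W')"
    "0 < quality (2 + \<tau>) G * ((1 - (if i = j \<and> j < 0 then 1 else 0) / real p)^2
        * (1 - 1 / real p powr (1 + \<tau>/4)))"
proof -
  define lo where "lo S = {v \<in> S. ep p v \<le> k}" for S
  define hi where "hi S = {v \<in> S. ep p v = k + 1}" for S
  define c where "c i j = (1 - (if i = j \<and> j < 0 then 1 else 0) / real p)^2
    * (1 - 1 / real p powr (1 + \<tau>/4))" for i j :: int
  define cands where "cands = {(k, k, lo (gV G), lo (gW G)), (k, k + 1, lo (gV G), hi (gW G)),
    (k + 1, k, hi (gV G), lo (gW G))}"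
  have wbg: "is_wbg (gmu G) (gV G) (gW G) (gE G)" and E0: "gE G \<noteq> {}" and EVW: "gE G \<subseteq> gV G \<times> gW G"
    using G by (auto simp: is_gcd_graph_def nontrivial_def is_wbg_def)
  have blocks: "gE G \<subseteq> lo (gV G) \<times> lo (gW G) \<union> lo (gV G) \<times> hi (gW G) \<union> hi (gV G) \<times> lo (gW G)"
    using k(2) EVW by (fastforce simp: lo_def hi_def)
  have "lo S \<subseteq> S" "hi S \<subseteq> S" "lo S \<inter> hi S = {}" for S by (auto simp: lo_def hi_def)
  from mu_theta_split[OF \<tau> p(3) wbg E0 this this blocks]
  have "\<exists>(i, j, V', W')\<in>cands. c i j * mu_theta (2 + \<tau>) (gmu G) (gV G) (gW G) (gE G)
      \<le> real p ^ nat \<bar>i - j\<bar> * mu_theta (2 + \<tau>) (gmu G) V' W' (gE G \<inter> V' \<times> W')"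
    using k(1) by (auto simp: cands_def lo_def hi_def c_def)
  then obtain i j V' W' where ij: "(i, j, V', W') \<in> cands"
    and good: "c i j * mu_theta (2 + \<tau>) (gmu G) (gV G) (gW G) (gE G)
      \<le> real p ^ nat \<bar>i - j\<bar> * mu_theta (2 + \<tau>) (gmu G) V' W' (gE G \<inter> V' \<times> W')" by blast
  have props: "i \<le> 0" "j \<le> 0" "V' \<subseteq> gV G" "W' \<subseteq> gW G" "\<forall>v\<in>V'. ep p v \<le> i" "\<forall>w\<in>W'. ep p w \<le> j"
    using ij k(1) by (auto simp: cands_def lo_def hi_def)
  have "max (ep p v) (ep p w) = max i j" if vw: "(v, w) \<in> gE G \<inter> (V' \<times> W')" for v w
  proof -
    have "(ep p v - k, ep p w - k) \<in> {(-1,0), (0,-1), (0,0), (0,1), (1,0)}" using k(2) vw by blast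
    thus ?thesis using ij vw by (auto simp: cands_def lo_def hi_def)
  qed
  hence edges: "\<forall>(v, w)\<in>gE G \<inter> (V' \<times> W'). max (ep p v) (ep p w) = max i j" by blast
  have "0 \<le> (\<Prod>q\<in>gP G. real q ^ nat \<bar>gf G q - gg G q\<bar>)" by (intro prod_nonneg) auto
  from mult_right_mono[OF good this]
  have "quality (2 + \<tau>) G * c i j \<le> quality (2 + \<tau>) (refine_at G p i j V' W')"
    using G(1) p(2) by (simp add: quality_refine_at is_gcd_graph_def quality_def[of _ G] ac_simps)
  moreover have "0 < quality (2 + \<tau>) G * c i j"
    using quality_pos[OF G] refinement_factor_pos[OF \<tau> p(3)] by (simp add: c_def)
  ultimately show ?thesis
    using that[OF props is_gcd_graph_refine_at[OF G(1) p(1,2) props(3,4,1,2,5,6) edges]]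
    unfolding c_def by blast
qed

lemma C6_ge:
  assumes "0 < \<tau>" "\<tau> < 1/100" "M \<ge> 2"
  shows "C6 \<tau> M \<ge> 10^20"
proof -
  have "C1 \<tau> \<ge> 10^6" unfolding C1_def using assms by (simp add: field_simps)
  hence "C1 \<tau> ^ 3 \<ge> (10^6)^3" by (intro power_mono) auto
  hence "C2 \<tau> M \<ge> 10 * 2 * 10^18" unfolding C2_def using assms by (intro mult_mono) auto
  hence "10^4 * M * C2 \<tau> M \<ge> 10^4 * 2 * (10 * 2 * 10^18)" using assms by (intro mult_mono) auto
  thus ?thesis unfolding C6_def by simp
qed

theorem proposition7p16:
  fixes \<tau> M :: real and G :: gcd_graph
  assumes "0 < \<tau>" and "\<tau> < 1/100" and "M \<ge> 2"
    and "is_gcd_graph G" and "nontrivial G" and "structured G"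
    and "\<forall>p\<in>RG G. real p > C6 \<tau> M"
    and "RGminus G \<noteq> {}"
  shows "\<exists>G'. numerator_exact G' G \<and>
      nontrivial G' \<and> maximal (2 + \<tau>) G' \<and>
      gP G \<subset> gP G' \<and> gP G' \<subseteq> gP G \<union> RGminus G \<and>
      RGminus G' \<subset> RGminus G \<and> RGplus G' \<subseteq> RGplus G \<and>
      (\<forall>p\<in>gP G' - gP G. gf G' p \<le> 0 \<and> gg G' p \<le> 0) \<and>
      quality (2 + \<tau>) G' \<ge> quality (2 + \<tau>) G *
        (\<Prod>p\<in>gP G' - gP G.
           (1 - (if gf G' p = gg G' p \<and> gg G' p < 0 then 1 else 0) / real p)^2 *
           (1 - 1 / real p powr (1 + \<tau>/4)))"
proof -
  obtain p where pR: "p \<in> RGminus G" using assms(8) by blast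
  hence pRG: "p \<in> RG G" by (simp add: RGminus_def)
  hence "real p > C6 \<tau> M" using assms(7) by blast
  hence p: "prime p" "p \<notin> gP G" "real p \<ge> 10^20"
    using pRG C6_ge[OF assms(1-3)] by (simp_all add: RG_def)
  obtain k where "k \<le> -1"
    "\<forall>(v, w)\<in>gE G. (ep p v - k, ep p w - k) \<in> {(-1,0), (0,-1), (0,0), (0,1), (1,0)}"
    using RGminus_level[OF assms(4,6) pR] .
  then show ?thesis
    by (rule exists_good_refinement[OF assms(1,2,4,5) p])
       (rule refinement_from_candidate[OF assms(4,6) pR]; assumption)
qed

end
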